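(* Let $p\ge 2$ and let $f\colon X\times Y\to\mathbb R$ be centered with $\|f\|D_p<\infty$. Then $$\sup_{L\subset\mathbb Z_+^2,\ 1\le|L|<\infty}|S_L[f]|_p\le K_R^2(p)\,\|f\|D_p .$$
   Context: Let $(X,\mathcal B,\mu)$, $(Y,\mathcal C,\nu)$ be probability spaces and $\xi(1),\xi(2),\dots,\eta(1),\eta(2),\dots$ mutually independent random variables, $\xi(i)$ with law $\mu$, $\eta(j)$ with law $\nu$; $\xi=\xi(1)$, $\eta=\eta(1)$; $|\zeta|_p=(\mathbf E|\zeta|^p)^{1/p}$, $|g|_p=|g(\xi)|_p$, $|h|_p=|h(\eta)|_p$. Centered means $\mathbf E f(\xi,\eta)=0$. For finite non-empty $L\subset\mathbb Z_+^2$ ($\mathbb Z_+=\{1,2,\dots\}$), $S_L[f]:=|L|^{-1/2}\sum_{(k_1,k_2)\in L}f(\xi(k_1),\eta(k_2))$. $K_R(p)$ is the smallest constant $K$ such that for all $n$, real $c_1,\dots,c_n$, and i.i.d. centered $\zeta_1,\dots,\zeta_n$ with finite $p$-th moment, $|\sum c_i\zeta_i|_p\le K(\sum c_i^2)^{1/2}|\zeta_1|_p$. $\|f\|D_p:=\inf\sum_{i,j}|\lambda_{i,j}||g_i|_p|h_j|_p$ over all representations $f(x,y)=\sum_{i,j=1}^M\lambda_{i,j}g_i(x)h_j(y)$, $M\le\infty$, with $\mathbf E g_i(\xi)=\mathbf E h_j(\eta)=0$, $g_i\in L_p(\mu)$, $h_j\in L_p(\nu)$, the series converging in $L_p(\mu\otimes\nu)$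 if $M=\infty$. *)

theory Defs
  imports "HOL-Probability.Probability"
begin

definition lpnorm :: "'a measure \<Rightarrow> real \<Rightarrow> ('a \<Rightarrow> real) \<Rightarrow> ereal" where
  "lpnorm M p g =
     (if integrable M (\<lambda>x. \<bar>g x\<bar> powr p)
      then ereal ((\<integral>x. \<bar>g x\<bar> powr p \<partial>M) powr (1 / p)) else \<infinity>)"

text \<open>Real-valued p-norm, used for functions already known to lie in L_p.\<close>
definition Lpn :: "'a measure \<Rightarrow> real \<Rightarrow> ('a \<Rightarrow> real) \<Rightarrow> real" where
  "Lpn M p g = (\<integral>x. \<bar>g x\<bar> powr p \<partial>M) powr (1 / p)"

text \<open>Since the inequality only
  depends on the common law, the underlying probability spaces are taken on the
  type nat => real (where every i.i.d. sequence can be realised).\<close>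
definition KR :: "real \<Rightarrow> ereal" where
  "KR p = Inf {ereal K | K. \<forall>(M :: (nat \<Rightarrow> real) measure) (n::nat) (c :: nat \<Rightarrow> real)
      (\<zeta> :: nat \<Rightarrow> (nat \<Rightarrow> real) \<Rightarrow> real).
      prob_space M \<and> 0 < n \<and>
      (\<forall>i<n. \<zeta> i \<in> borel_measurable M) \<and>
      prob_space.indep_vars M (\<lambda>_. borel) \<zeta> {..<n} \<and>
      (\<forall>i<n. distr M borel (\<zeta> i) = distr M borel (\<zeta> 0)) \<and>
      integrable M (\<lambda>\<omega>. \<bar>\<zeta> 0 \<omega>\<bar> powr p) \<and>
      integrable M (\<zeta> 0) \<and> (\<integral>\<omega>. \<zeta> 0 \<omega> \<partial>M) = 0
      \<longrightarrow> lpnorm M p (\<lambda>\<omega>. \<Sum>i<n. c i * \<zeta> i \<omega>)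
            \<le> ereal K * ereal (sqrt (\<Sum>i<n. (c i)\<^sup>2)) * lpnorm M p (\<zeta> 0)}"

text \<open>Finite representations (M < infinity) are the special case
  where lambda vanishes outside a finite square; the double series is required to
  converge to f in L_p(mu x nu) along square partial sums.\<close>
definition Dnorm :: "'x measure \<Rightarrow> 'y measure \<Rightarrow> real \<Rightarrow> ('x \<times> 'y \<Rightarrow> real) \<Rightarrow> ereal" where
  "Dnorm \<mu> \<nu> p f = Inf {c. \<exists>(lam :: nat \<Rightarrow> nat \<Rightarrow> real) (g :: nat \<Rightarrow> 'x \<Rightarrow> real) (h :: nat \<Rightarrow> 'y \<Rightarrow> real).
      (\<forall>i. g i \<in> borel_measurable \<mu> \<and> integrable \<mu> (\<lambda>x. \<bar>g i x\<bar> powr p) \<and>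
           integrable \<mu> (g i) \<and> (\<integral>x. g i x \<partial>\<mu>) = 0) \<and>
      (\<forall>j. h j \<in> borel_measurable \<nu> \<and> integrable \<nu> (\<lambda>y. \<bar>h j y\<bar> powr p) \<and>
           integrable \<nu> (h j) \<and> (\<integral>y. h j y \<partial>\<nu>) = 0) \<and>
      ((\<lambda>N. \<integral>\<^sup>+ z. ennreal (\<bar>(\<Sum>i<N. \<Sum>j<N. lam i j * g i (fst z) * h j (snd z)) - f z\<bar> powr p)
              \<partial>(\<mu> \<Otimes>\<^sub>M \<nu>)) \<longlonglongrightarrow> 0) \<and>
      c = (\<Sum>i. \<Sum>j. ereal (\<bar>lam i j\<bar> * Lpn \<mu> p (g i) * Lpn \<nu> p (h j)))}"

text \<open>xi(1), xi(2), ..., eta(1), eta(2), ... are mutually independent, xi(i) has law mu,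
  eta(j) has law nu (indices start at 1; index 0 is irrelevant).\<close>
definition indep_laws :: "'m measure \<Rightarrow> 'x measure \<Rightarrow> 'y measure \<Rightarrow>
    (nat \<Rightarrow> 'm \<Rightarrow> 'x) \<Rightarrow> (nat \<Rightarrow> 'm \<Rightarrow> 'y) \<Rightarrow> bool" where
  "indep_laws M \<mu> \<nu> \<xi> \<eta> \<longleftrightarrow>
     (\<forall>i\<ge>1. \<xi> i \<in> M \<rightarrow>\<^sub>M \<mu>) \<and> (\<forall>j\<ge>1. \<eta> j \<in> M \<rightarrow>\<^sub>M \<nu>) \<and>
     (\<forall>I J A B. finite I \<and> finite J \<and> I \<subseteq> {1..} \<and> J \<subseteq> {1..} \<and>
        (\<forall>i\<in>I. A i \<in> sets \<mu>) \<and> (\<forall>j\<in>J. B j \<in> sets \<nu>) \<longrightarrow>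
        measure M ((\<Inter>i\<in>I. \<xi> i -` A i) \<inter> (\<Inter>j\<in>J. \<eta> j -` B j) \<inter> space M)
          = (\<Prod>i\<in>I. measure \<mu> (A i)) * (\<Prod>j\<in>J. measure \<nu> (B j)))"

definition SL :: "(nat \<times> nat) set \<Rightarrow> ('x \<times> 'y \<Rightarrow> real) \<Rightarrow> (nat \<Rightarrow> 'm \<Rightarrow> 'x) \<Rightarrow>
    (nat \<Rightarrow> 'm \<Rightarrow> 'y) \<Rightarrow> 'm \<Rightarrow> real" where
  "SL L f \<xi> \<eta> \<omega> = (1 / sqrt (real (card L))) * (\<Sum>(k1, k2)\<in>L. f (\<xi> k1 \<omega>, \<eta> k2 \<omega>))"

end

theory Submission
  imports Defs
begin

text \<open>Expand \<open>f = \<Sum> \<lambda>\<^sub>i\<^sub>j g\<^sub>i \<otimes> h\<^sub>j\<close>. By Minkowski's inequality it suffices to show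
  \<open>|S\<^sub>L[g \<otimes> h]|\<^sub>p \<le> K\<^sup>2 |g|\<^sub>p |h|\<^sub>p\<close> for centered \<open>g\<close>, \<open>h\<close> and every constant \<open>K\<close> admissible in the
  definition of \<open>K\<^sub>R(p)\<close>; the tail of the expansion costs at most \<open>\<surd>|L|\<close> times its
  \<open>L\<^sub>p(\<mu> \<otimes> \<nu>)\<close>-norm, which tends to zero. For the bilinear bound one conditions on the \<open>\<eta>\<close>'s:
  the sum over \<open>L\<close> becomes a weighted sum of independent copies \<open>g (\<xi> a)\<close>, so the Rosenthal-type
  inequality is applied once in the \<open>\<xi>\<close>'s and once in the \<open>\<eta>\<close>'s.\<close>

section \<open>\<open>L\<^sub>p\<close> norms and Minkowski's inequality\<close>

lemma powr_convex_combination_nonneg: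
  fixes x y t p :: real
  assumes p: "p \<ge> 1" and t: "0 \<le> t" "t \<le> 1" and xy: "0 \<le> x" "0 \<le> y"
  shows "((1 - t) * x + t * y) powr p \<le> (1 - t) * x powr p + t * y powr p"
proof (cases "x = 0 \<or> y = 0")
  case True
  have powr_le_self: "s powr p \<le> s" if "0 \<le> s" "s \<le> 1" for s :: real
    using that p powr_le_one_le[of s p] by (cases "s = 0") auto
  show ?thesis
  proof (cases "x = 0")
    case True
    have "(t * y) powr p = t powr p * y powr p" using t xy by (simp add: powr_mult)
    also have "\<dots> \<le> t * y powr p" using powr_le_self[of t] t by (intro mult_right_mono) auto
    finally show ?thesis using True by simp
  next
    case False
    with True have "y = 0" by auto
    have "((1 - t) * x) powr p = (1 - t) powr p * x powr p" using t xy by (simp add: powr_mult)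
    also have "\<dots> \<le> (1 - t) * x powr p" using powr_le_self[of "1 - t"] t by (intro mult_right_mono) auto
    finally show ?thesis using \<open>y = 0\<close> by simp
  qed
next
  case False
  then have "x > 0" "y > 0" using xy by auto
  then show ?thesis
    using convex_onD[OF powr_convex[OF p], of t x y] t by simp
qed

lemma abs_powr_convex_combination:
  fixes u v t p :: real
  assumes p: "p \<ge> 1" and t: "0 \<le> t" "t \<le> 1"
  shows "\<bar>t * u + (1 - t) * v\<bar> powr p \<le> t * \<bar>u\<bar> powr p + (1 - t) * \<bar>v\<bar> powr p"
proof -
  have "\<bar>t * u + (1 - t) * v\<bar> \<le> t * \<bar>u\<bar> + (1 - t) * \<bar>v\<bar>"
    using t by (metis abs_mult abs_of_nonneg abs_triangle_ineq diff_ge_0_iff_ge)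
  then have "\<bar>t * u + (1 - t) * v\<bar> powr p \<le> (t * \<bar>u\<bar> + (1 - t) * \<bar>v\<bar>) powr p"
    using p by (intro powr_mono2) auto
  also have "\<dots> \<le> t * \<bar>u\<bar> powr p + (1 - t) * \<bar>v\<bar> powr p"
    using powr_convex_combination_nonneg[OF p, of "1 - t" "\<bar>u\<bar>" "\<bar>v\<bar>"] t
    by (simp add: algebra_simps)
  finally show ?thesis .
qed

lemma sqrt_powr: "s \<ge> 0 \<Longrightarrow> sqrt s powr p = s powr (p / 2)"
  by (simp add: powr_half_sqrt[symmetric] powr_powr)

lemma power2_powr_half: "p > 0 \<Longrightarrow> (x::real)\<^sup>2 powr (p / 2) = \<bar>x\<bar> powr p"
  using powr_powr[of "\<bar>x\<bar>" 2 "p / 2"] by (simp add: powr_realpow[symmetric])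

lemma Lpn_nonneg: "Lpn N p f \<ge> 0"
  by (simp add: Lpn_def)

lemma Lpn_powr:
  assumes "p > 0"
  shows "Lpn N p f powr p = (\<integral>x. \<bar>f x\<bar> powr p \<partial>N)"
proof -
  have "(\<integral>x. \<bar>f x\<bar> powr p \<partial>N) \<ge> 0" by (intro integral_nonneg_AE) auto
  then show ?thesis using assms by (simp add: Lpn_def powr_powr)
qed

lemma Lpn_le_powr:
  assumes "p > 0" and "(\<integral>x. \<bar>f x\<bar> powr p \<partial>N) \<le> B"
  shows "Lpn N p f \<le> B powr (1 / p)"
  unfolding Lpn_def using assms by (intro powr_mono2) (auto intro!: integral_nonneg_AE)

lemma Lpn_le:
  assumes "p > 0" "c \<ge> 0" "(\<integral>x. \<bar>f x\<bar> powr p \<partial>N) \<le> c powr p"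
  shows "Lpn N p f \<le> c"
  using Lpn_le_powr[OF assms(1,3)] assms(1,2) by (simp add: powr_powr)

lemma integral_abs_powr_le_if_Lpn_le:
  assumes "p > 0" "c \<ge> 0" "G \<ge> 0" "Lpn N p f \<le> c * G powr (1 / p)"
  shows "(\<integral>x. \<bar>f x\<bar> powr p \<partial>N) \<le> c powr p * G"
proof -
  have "Lpn N p f powr p \<le> (c * G powr (1 / p)) powr p"
    using assms by (intro powr_mono2) (auto simp: Lpn_nonneg)
  then show ?thesis using assms by (simp add: Lpn_powr powr_mult powr_powr)
qed

lemma Lpn_tendsto_zero:
  assumes p: "p > 0" and F: "\<And>n. F n \<in> borel_measurable N"
    and lim: "(\<lambda>n. \<integral>\<^sup>+x. ennreal (\<bar>F n x\<bar> powr p) \<partial>N) \<longlonglongrightarrow> 0"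
  shows "(\<lambda>n. Lpn N p (F n)) \<longlonglongrightarrow> 0"
proof -
  have "Lpn N p (F n) = enn2real (\<integral>\<^sup>+x. ennreal (\<bar>F n x\<bar> powr p) \<partial>N) powr (1 / p)" for n
    unfolding Lpn_def using F by (subst integral_eq_nn_integral) auto
  moreover have "(\<lambda>n. enn2real (\<integral>\<^sup>+x. ennreal (\<bar>F n x\<bar> powr p) \<partial>N)) \<longlonglongrightarrow> 0"
    using tendsto_enn2real[OF lim[unfolded ennreal_0[symmetric]]] by simp
  ultimately show ?thesis
    using p by (auto intro!: tendsto_zero_powrI)
qed

lemma Lpn_cmult:
  assumes "p > 0"
  shows "Lpn N p (\<lambda>x. c * f x) = \<bar>c\<bar> * Lpn N p f"
proof -
  have "(\<integral>x. \<bar>c * f x\<bar> powr p \<partial>N) = \<bar>c\<bar> powr p * (\<integral>x. \<bar>f x\<bar> powr p \<partial>N)"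
    by (simp add: abs_mult powr_mult)
  moreover have "(\<integral>x. \<bar>f x\<bar> powr p \<partial>N) \<ge> 0" by (intro integral_nonneg_AE) auto
  ultimately show ?thesis using assms by (simp add: Lpn_def powr_mult powr_powr)
qed

lemma integrable_abs_powr_cmult:
  fixes f :: "'a \<Rightarrow> real"
  assumes "integrable N (\<lambda>x. \<bar>f x\<bar> powr p)"
  shows "integrable N (\<lambda>x. \<bar>c * f x\<bar> powr p)"
  using assms by (simp add: abs_mult powr_mult)

lemma integrable_abs_powr_add:
  fixes f g :: "'a \<Rightarrow> real"
  assumes p: "p \<ge> 1" and [measurable]: "f \<in> borel_measurable N" "g \<in> borel_measurable N"
    and "integrable N (\<lambda>x. \<bar>f x\<bar> powr p)" "integrable N (\<lambda>x. \<bar>g x\<bar> powr p)"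
  shows "integrable N (\<lambda>x. \<bar>f x + g x\<bar> powr p)"
proof (rule Bochner_Integration.integrable_bound)
  show "integrable N (\<lambda>x. (2 powr p / 2) * (\<bar>f x\<bar> powr p + \<bar>g x\<bar> powr p))"
    using assms by auto
  show "AE x in N. norm (\<bar>f x + g x\<bar> powr p) \<le> norm ((2 powr p / 2) * (\<bar>f x\<bar> powr p + \<bar>g x\<bar> powr p))"
  proof (intro AE_I2)
    fix x
    have "\<bar>(1/2) * (2 * f x) + (1 - 1/2) * (2 * g x)\<bar> powr p
        \<le> (1/2) * \<bar>2 * f x\<bar> powr p + (1 - 1/2) * \<bar>2 * g x\<bar> powr p"
      by (rule abs_powr_convex_combination[OF p]) auto
    then show "norm (\<bar>f x + g x\<bar> powr p) \<le> norm ((2 powr p / 2) * (\<bar>f x\<bar> powr p + \<bar>g x\<bar> powr p))"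
      by (simp add: abs_mult powr_mult algebra_simps)
  qed
qed measurable

text \<open>With \<open>A = \<parallel>f\<parallel>\<^sub>p + \<epsilon>/2\<close>, \<open>B = \<parallel>g\<parallel>\<^sub>p + \<epsilon>/2\<close> and
  \<open>t = A / (A + B)\<close>, convexity of \<open>\<bar>\<cdot>\<bar> powr p\<close> applied to \<open>f + g = (A + B) (t f/A + (1 - t) g/B)\<close>
  gives \<open>\<integral>\<bar>f + g\<bar>\<^sup>p \<le> (A + B)\<^sup>p\<close>.\<close>
lemma Lpn_add_le:
  fixes f g :: "'a \<Rightarrow> real"
  assumes p: "p \<ge> 1" and [measurable]: "f \<in> borel_measurable N" "g \<in> borel_measurable N"
    and fi: "integrable N (\<lambda>x. \<bar>f x\<bar> powr p)" and gi: "integrable N (\<lambda>x. \<bar>g x\<bar> powr p)"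
  shows "Lpn N p (\<lambda>x. f x + g x) \<le> Lpn N p f + Lpn N p g"
proof (rule field_le_epsilon)
  fix e :: real assume e: "e > 0"
  define A where "A = Lpn N p f + e / 2"
  define B where "B = Lpn N p g + e / 2"
  have AB: "A > 0" "B > 0"
    using e Lpn_nonneg[of N p f] Lpn_nonneg[of N p g] by (auto simp: A_def B_def)
  define t where "t = A / (A + B)"
  have t: "0 \<le> t" "t \<le> 1" "1 - t = B / (A + B)" using AB by (auto simp: t_def field_simps)
  have pointwise: "\<bar>f x + g x\<bar> powr p
      \<le> (A + B) powr p * (t * (\<bar>f x\<bar> powr p / A powr p) + (1 - t) * (\<bar>g x\<bar> powr p / B powr p))" for x
  proof -
    have "t * (f x / A) + (1 - t) * (g x / B) = (f x + g x) / (A + B)"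
      unfolding t(3) using AB by (simp add: t_def add_divide_distrib)
    then have "f x + g x = (A + B) * (t * (f x / A) + (1 - t) * (g x / B))"
      using AB by simp
    then have "\<bar>f x + g x\<bar> powr p = (A + B) powr p * \<bar>t * (f x / A) + (1 - t) * (g x / B)\<bar> powr p"
      using AB by (simp add: abs_mult powr_mult)
    also have "\<dots> \<le> (A + B) powr p * (t * \<bar>f x / A\<bar> powr p + (1 - t) * \<bar>g x / B\<bar> powr p)"
      by (intro mult_left_mono abs_powr_convex_combination[OF p t(1,2)]) auto
    finally show ?thesis using AB by (simp add: abs_divide powr_divide)
  qed
  have ratio: "(\<integral>x. \<bar>f x\<bar> powr p \<partial>N) / A powr p \<le> 1" "(\<integral>x. \<bar>g x\<bar> powr p \<partial>N) / B powr p \<le> 1"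
    using AB e p Lpn_nonneg[of N p f] Lpn_nonneg[of N p g]
    by (auto simp: A_def B_def Lpn_powr[symmetric] intro!: powr_mono2)
  have "(\<integral>x. \<bar>f x + g x\<bar> powr p \<partial>N)
      \<le> (\<integral>x. (A + B) powr p * (t * (\<bar>f x\<bar> powr p / A powr p) + (1 - t) * (\<bar>g x\<bar> powr p / B powr p)) \<partial>N)"
    using fi gi integrable_abs_powr_add[OF assms] pointwise by (intro integral_mono) auto
  also have "\<dots> = (A + B) powr p * (t * ((\<integral>x. \<bar>f x\<bar> powr p \<partial>N) / A powr p)
      + (1 - t) * ((\<integral>x. \<bar>g x\<bar> powr p \<partial>N) / B powr p))"
    using fi gi by simp
  also have "\<dots> \<le> (A + B) powr p * (t * 1 + (1 - t) * 1)"
    using ratio t by (intro mult_left_mono add_mono) auto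
  finally have "Lpn N p (\<lambda>x. f x + g x) \<le> A + B"
    using AB p by (intro Lpn_le) auto
  then show "Lpn N p (\<lambda>x. f x + g x) \<le> Lpn N p f + Lpn N p g + e"
    by (simp add: A_def B_def)
qed

lemma integrable_abs_powr_sum:
  fixes f :: "'i \<Rightarrow> 'a \<Rightarrow> real"
  assumes p: "p \<ge> 1" and "finite I"
    and "\<And>i. i \<in> I \<Longrightarrow> f i \<in> borel_measurable N"
    and "\<And>i. i \<in> I \<Longrightarrow> integrable N (\<lambda>x. \<bar>f i x\<bar> powr p)"
  shows "integrable N (\<lambda>x. \<bar>\<Sum>i\<in>I. f i x\<bar> powr p)"
  using assms(2-)
proof (induction I rule: finite_induct)
  case (insert j I)
  then show ?case
    using integrable_abs_powr_add[OF p, of "f j" N "\<lambda>x. \<Sum>i\<in>I. f i x"] by simp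
qed (use p in simp)

lemma Lpn_sum_le:
  fixes f :: "'i \<Rightarrow> 'a \<Rightarrow> real"
  assumes p: "p \<ge> 1" and "finite I"
    and "\<And>i. i \<in> I \<Longrightarrow> f i \<in> borel_measurable N"
    and "\<And>i. i \<in> I \<Longrightarrow> integrable N (\<lambda>x. \<bar>f i x\<bar> powr p)"
  shows "Lpn N p (\<lambda>x. \<Sum>i\<in>I. f i x) \<le> (\<Sum>i\<in>I. Lpn N p (f i))"
  using assms(2-)
proof (induction I rule: finite_induct)
  case empty
  then show ?case using p by (simp add: Lpn_def)
next
  case (insert j I)
  have "Lpn N p (\<lambda>x. f j x + (\<Sum>i\<in>I. f i x)) \<le> Lpn N p (f j) + Lpn N p (\<lambda>x. \<Sum>i\<in>I. f i x)"
    using insert.prems integrable_abs_powr_sum[OF p insert.hyps(1), of f N]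
    by (intro Lpn_add_le[OF p]) auto
  then show ?case using insert by simp
qed

section \<open>Joint laws of independent samples\<close>

lemma product_prob_space_const: "prob_space \<mu> \<Longrightarrow> product_prob_space (\<lambda>_. \<mu>)"
  by (simp add: product_prob_space_def product_prob_space_axioms_def product_sigma_finite_def
      prob_space_imp_sigma_finite)

lemma indep_vars_distr:
  assumes P: "prob_space P" and T: "T \<in> P \<rightarrow>\<^sub>M S" and I: "I \<noteq> {}"
    and X: "\<And>i. i \<in> I \<Longrightarrow> X i \<in> S \<rightarrow>\<^sub>M M' i"
    and ind: "prob_space.indep_vars P M' (\<lambda>i x. X i (T x)) I"
  shows "prob_space.indep_vars (distr P S T) M' X I"
proof -
  interpret P: prob_space P by fact
  interpret N: prob_space "distr P S T" using T by (rule P.prob_space_distr)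
  have XN: "X i \<in> distr P S T \<rightarrow>\<^sub>M M' i" if "i \<in> I" for i using X[OF that] by simp
  have XT: "(\<lambda>x. X i (T x)) \<in> P \<rightarrow>\<^sub>M M' i" if "i \<in> I" for i
    using X[OF that] T by (rule measurable_compose[rotated])
  have "(\<lambda>x. \<lambda>i\<in>I. X i x) \<in> S \<rightarrow>\<^sub>M PiM I M'"
    using X by (intro measurable_restrict) auto
  then have "distr (distr P S T) (PiM I M') (\<lambda>x. \<lambda>i\<in>I. X i x)
      = distr P (PiM I M') (\<lambda>x. \<lambda>i\<in>I. X i (T x))"
    using T by (simp add: distr_distr comp_def)
  also have "\<dots> = (\<Pi>\<^sub>M i\<in>I. distr P (M' i) (\<lambda>x. X i (T x)))"
    using P.indep_vars_iff_distr_eq_PiM'[OF I XT] ind by simp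
  also have "\<dots> = (\<Pi>\<^sub>M i\<in>I. distr (distr P S T) (M' i) (X i))"
    using X T by (intro PiM_cong refl) (simp add: distr_distr comp_def)
  finally show ?thesis
    using N.indep_vars_iff_distr_eq_PiM'[OF I XN] by simp
qed

lemma indep_vars_PiM_reindex:
  assumes mu: "prob_space \<mu>" and e: "bij_betw e {..<n} A" and n: "0 < n"
  shows "prob_space.indep_vars (PiM A (\<lambda>_. \<mu>)) (\<lambda>_. \<mu>) (\<lambda>i x. x (e i)) {..<n}"
proof -
  interpret P: prob_space "PiM A (\<lambda>_. \<mu>)" using mu by (intro prob_space_PiM) auto
  have eA: "e i \<in> A" if "i < n" for i using e that by (auto simp: bij_betw_def)
  have rv: "(\<lambda>x. x (e i)) \<in> PiM A (\<lambda>_. \<mu>) \<rightarrow>\<^sub>M \<mu>" if "i \<in> {..<n}" for i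
    using eA that by (intro measurable_component_singleton) auto
  have "distr (PiM A (\<lambda>_. \<mu>)) (PiM {..<n} (\<lambda>_. \<mu>)) (\<lambda>x. \<lambda>i\<in>{..<n}. x (e i))
      = PiM {..<n} (\<lambda>_. \<mu>)"
    using distr_PiM_reindex[of A "\<lambda>_. \<mu>" e "{..<n}"] mu e eA by (auto simp: bij_betw_def)
  also have "\<dots> = PiM {..<n} (\<lambda>i. distr (PiM A (\<lambda>_. \<mu>)) \<mu> (\<lambda>x. x (e i)))"
    using mu eA by (intro PiM_cong refl) (subst distr_PiM_component[where M="\<lambda>_. \<mu>" and I=A], auto)
  moreover have "{..<n} \<noteq> {}" using n by auto
  ultimately show ?thesis
    using P.indep_vars_iff_distr_eq_PiM'[of "{..<n}" "\<lambda>i x. x (e i)" "\<lambda>_. \<mu>", OF _ rv] by simp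
qed

lemma sets_pair_PiM_rectangles:
  "sets (PiM A M1 \<Otimes>\<^sub>M PiM B M2) = sigma_sets (space (PiM A M1) \<times> space (PiM B M2))
     {a \<times> b | a b. a \<in> prod_algebra A M1 \<and> b \<in> prod_algebra B M2}"
proof -
  have s1: "a \<subseteq> space (PiM A M1)" if "a \<in> prod_algebra A M1" for a
    unfolding space_PiM using prod_algebra_sets_into_space[of A M1] that by blast
  have s2: "b \<subseteq> space (PiM B M2)" if "b \<in> prod_algebra B M2" for b
    unfolding space_PiM using prod_algebra_sets_into_space[of B M2] that by blast
  have "sets (PiM A M1 \<Otimes>\<^sub>M PiM B M2) = sets (sigma (space (PiM A M1) \<times> space (PiM B M2))
     {a \<times> b | a b. a \<in> prod_algebra A M1 \<and> b \<in> prod_algebra B M2})"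
  proof (rule sets_pair_eq[where Ca="{space (PiM A M1)}" and Cb="{space (PiM B M2)}"])
    show "sets (PiM A M1) = sigma_sets (space (PiM A M1)) (prod_algebra A M1)"
      "sets (PiM B M2) = sigma_sets (space (PiM B M2)) (prod_algebra B M2)"
      by (simp_all add: sets_PiM space_PiM)
    show "{space (PiM A M1)} \<subseteq> prod_algebra A M1" "{space (PiM B M2)} \<subseteq> prod_algebra B M2"
      using space_in_prod_algebra[of A M1] space_in_prod_algebra[of B M2] by (simp_all add: space_PiM)
  qed (use s1 s2 in auto)
  also have "\<dots> = sigma_sets (space (PiM A M1) \<times> space (PiM B M2))
     {a \<times> b | a b. a \<in> prod_algebra A M1 \<and> b \<in> prod_algebra B M2}"
    using s1 s2 by (intro sets_measure_of) blast
  finally show ?thesis .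
qed

lemma Int_stable_rectangles:
  "Int_stable {a \<times> b | a b. a \<in> prod_algebra A M1 \<and> b \<in> prod_algebra B M2}"
proof (rule Int_stableI)
  fix X Y assume "X \<in> {a \<times> b | a b. a \<in> prod_algebra A M1 \<and> b \<in> prod_algebra B M2}"
    "Y \<in> {a \<times> b | a b. a \<in> prod_algebra A M1 \<and> b \<in> prod_algebra B M2}"
  then obtain a1 a2 b1 b2 where XY: "X = a1 \<times> a2" "Y = b1 \<times> b2"
    and h: "a1 \<in> prod_algebra A M1" "b1 \<in> prod_algebra A M1"
      "a2 \<in> prod_algebra B M2" "b2 \<in> prod_algebra B M2" by auto
  have "X \<inter> Y = (a1 \<inter> b1) \<times> (a2 \<inter> b2)" using XY by auto
  moreover have "a1 \<inter> b1 \<in> prod_algebra A M1" "a2 \<inter> b2 \<in> prod_algebra B M2"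
    using Int_stable_prod_algebra[of A M1] Int_stable_prod_algebra[of B M2] h
    unfolding Int_stable_def by blast+
  ultimately show "X \<inter> Y \<in> {a \<times> b | a b. a \<in> prod_algebra A M1 \<and> b \<in> prod_algebra B M2}"
    by blast
qed

locale indep_sampling =
  M: prob_space M + mu: prob_space \<mu> + nu: prob_space \<nu>
  for M :: "'m measure" and \<mu> :: "'x measure" and \<nu> :: "'y measure" +
  fixes \<xi> :: "nat \<Rightarrow> 'm \<Rightarrow> 'x" and \<eta> :: "nat \<Rightarrow> 'm \<Rightarrow> 'y"
  assumes indep_laws: "indep_laws M \<mu> \<nu> \<xi> \<eta>"
begin

lemma measurable_\<xi>: "i \<ge> 1 \<Longrightarrow> \<xi> i \<in> M \<rightarrow>\<^sub>M \<mu>"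
  and measurable_\<eta>: "j \<ge> 1 \<Longrightarrow> \<eta> j \<in> M \<rightarrow>\<^sub>M \<nu>"
  using indep_laws by (auto simp: indep_laws_def)

lemma measure_preimages_Int:
  assumes "finite I" "finite J" "I \<subseteq> {1..}" "J \<subseteq> {1..}"
    and "\<And>i. i \<in> I \<Longrightarrow> X i \<in> sets \<mu>" "\<And>j. j \<in> J \<Longrightarrow> Y j \<in> sets \<nu>"
  shows "measure M ((\<Inter>i\<in>I. \<xi> i -` X i) \<inter> (\<Inter>j\<in>J. \<eta> j -` Y j) \<inter> space M)
    = (\<Prod>i\<in>I. measure \<mu> (X i)) * (\<Prod>j\<in>J. measure \<nu> (Y j))"
proof -
  have "\<forall>I J X Y. finite I \<and> finite J \<and> I \<subseteq> {1..} \<and> J \<subseteq> {1..} \<and>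
      (\<forall>i\<in>I. X i \<in> sets \<mu>) \<and> (\<forall>j\<in>J. Y j \<in> sets \<nu>) \<longrightarrow>
      measure M ((\<Inter>i\<in>I. \<xi> i -` X i) \<inter> (\<Inter>j\<in>J. \<eta> j -` Y j) \<inter> space M)
        = (\<Prod>i\<in>I. measure \<mu> (X i)) * (\<Prod>j\<in>J. measure \<nu> (Y j))"
    using indep_laws unfolding indep_laws_def by (elim conjE)
  from this[rule_format, of I J X Y] show ?thesis using assms by auto
qed

lemma measurable_restrict_pair:
  assumes "A \<subseteq> {1..}" "B \<subseteq> {1..}"
  shows "(\<lambda>\<omega>. (\<lambda>i\<in>A. \<xi> i \<omega>, \<lambda>j\<in>B. \<eta> j \<omega>)) \<in> M \<rightarrow>\<^sub>M PiM A (\<lambda>_. \<mu>) \<Otimes>\<^sub>M PiM B (\<lambda>_. \<nu>)"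
  using assms measurable_\<xi> measurable_\<eta> by (intro measurable_Pair measurable_restrict) auto

lemma measurable_pair_sample: "a \<ge> 1 \<Longrightarrow> b \<ge> 1 \<Longrightarrow> (\<lambda>\<omega>. (\<xi> a \<omega>, \<eta> b \<omega>)) \<in> M \<rightarrow>\<^sub>M \<mu> \<Otimes>\<^sub>M \<nu>"
  using measurable_\<xi>[of a] measurable_\<eta>[of b] by measurable

lemma emeasure_restrict_pair_rectangle:
  assumes A: "finite A" "A \<subseteq> {1..}" and B: "finite B" "B \<subseteq> {1..}"
    and X: "X \<in> (\<Pi> i\<in>A. sets \<mu>)" and Y: "Y \<in> (\<Pi> j\<in>B. sets \<nu>)"
  shows "emeasure M ((\<lambda>\<omega>. (\<lambda>i\<in>A. \<xi> i \<omega>, \<lambda>j\<in>B. \<eta> j \<omega>)) -` (Pi\<^sub>E A X \<times> Pi\<^sub>E B Y) \<inter> space M)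
    = emeasure (PiM A (\<lambda>_. \<mu>) \<Otimes>\<^sub>M PiM B (\<lambda>_. \<nu>)) (Pi\<^sub>E A X \<times> Pi\<^sub>E B Y)"
proof -
  interpret m: product_prob_space "\<lambda>_. \<mu>" by (rule product_prob_space_const) unfold_locales
  interpret P2: prob_space "PiM B (\<lambda>_. \<nu>)" by (intro prob_space_PiM) unfold_locales
  have Xs: "\<And>i. i \<in> A \<Longrightarrow> X i \<in> sets \<mu>" and Ys: "\<And>j. j \<in> B \<Longrightarrow> Y j \<in> sets \<nu>"
    using X Y by auto
  have "(\<lambda>\<omega>. (\<lambda>i\<in>A. \<xi> i \<omega>, \<lambda>j\<in>B. \<eta> j \<omega>)) -` (Pi\<^sub>E A X \<times> Pi\<^sub>E B Y) \<inter> space M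
      = (\<Inter>i\<in>A. \<xi> i -` X i) \<inter> (\<Inter>j\<in>B. \<eta> j -` Y j) \<inter> space M"
    by (auto simp: PiE_iff)
  then have "emeasure M ((\<lambda>\<omega>. (\<lambda>i\<in>A. \<xi> i \<omega>, \<lambda>j\<in>B. \<eta> j \<omega>)) -` (Pi\<^sub>E A X \<times> Pi\<^sub>E B Y) \<inter> space M)
      = ennreal ((\<Prod>i\<in>A. measure \<mu> (X i)) * (\<Prod>j\<in>B. measure \<nu> (Y j)))"
    by (simp add: M.emeasure_eq_measure measure_preimages_Int[OF A(1) B(1) A(2) B(2) Xs Ys])
  also have "\<dots> = emeasure (PiM A (\<lambda>_. \<mu>)) (Pi\<^sub>E A X) * emeasure (PiM B (\<lambda>_. \<nu>)) (Pi\<^sub>E B Y)"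
  proof -
    have "emeasure (PiM A (\<lambda>_. \<mu>)) (Pi\<^sub>E A X) = (\<Prod>i\<in>A. emeasure \<mu> (X i))"
      by (rule m.emeasure_PiM) (use A Xs in auto)
    moreover have "emeasure (PiM B (\<lambda>_. \<nu>)) (Pi\<^sub>E B Y) = (\<Prod>j\<in>B. emeasure \<nu> (Y j))"
      by (rule product_sigma_finite.emeasure_PiM[OF product_prob_space.axioms(1)[OF
          product_prob_space_const[OF nu.prob_space_axioms]]]) (use B Ys in auto)
    ultimately show ?thesis
      by (simp add: mu.emeasure_eq_measure nu.emeasure_eq_measure prod_ennreal ennreal_mult prod_nonneg)
  qed
  also have "\<dots> = emeasure (PiM A (\<lambda>_. \<mu>) \<Otimes>\<^sub>M PiM B (\<lambda>_. \<nu>)) (Pi\<^sub>E A X \<times> Pi\<^sub>E B Y)"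
    by (rule P2.emeasure_pair_measure_Times[symmetric])
      (simp_all add: sets_PiM_I_finite A(1) B(1) Xs Ys)
  finally show ?thesis .
qed

lemma distr_restrict_pair:
  assumes A: "finite A" "A \<subseteq> {1..}" and B: "finite B" "B \<subseteq> {1..}"
  shows "distr M (PiM A (\<lambda>_. \<mu>) \<Otimes>\<^sub>M PiM B (\<lambda>_. \<nu>)) (\<lambda>\<omega>. (\<lambda>i\<in>A. \<xi> i \<omega>, \<lambda>j\<in>B. \<eta> j \<omega>))
    = PiM A (\<lambda>_. \<mu>) \<Otimes>\<^sub>M PiM B (\<lambda>_. \<nu>)"
    (is "distr M ?P ?\<Phi> = ?P")
proof -
  let ?E = "{a \<times> b | a b. a \<in> prod_algebra A (\<lambda>_. \<mu>) \<and> b \<in> prod_algebra B (\<lambda>_. \<nu>)}"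
  let ?\<Omega> = "space (PiM A (\<lambda>_. \<mu>)) \<times> space (PiM B (\<lambda>_. \<nu>))"
  have \<Phi>: "?\<Phi> \<in> M \<rightarrow>\<^sub>M ?P" using A B by (intro measurable_restrict_pair)
  have \<Omega>: "?\<Omega> \<in> ?E" by (auto simp: space_PiM intro!: space_in_prod_algebra)
  have sets_eq: "sets ?P = sigma_sets ?\<Omega> ?E" by (rule sets_pair_PiM_rectangles)
  show ?thesis
  proof (rule measure_eqI_generator_eq[where E="?E" and \<Omega>="?\<Omega>" and A="\<lambda>_. ?\<Omega>"])
    show "Int_stable ?E" by (rule Int_stable_rectangles)
    show "?E \<subseteq> Pow ?\<Omega>"
      unfolding space_PiM using prod_algebra_sets_into_space[of A "\<lambda>_. \<mu>"]
        prod_algebra_sets_into_space[of B "\<lambda>_. \<nu>"] by blast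
    show "sets (distr M ?P ?\<Phi>) = sigma_sets ?\<Omega> ?E" "sets ?P = sigma_sets ?\<Omega> ?E"
      using sets_eq by simp_all
    show "range (\<lambda>_. ?\<Omega>) \<subseteq> ?E" using \<Omega> by auto
    show "(\<Union>i::nat. ?\<Omega>) = ?\<Omega>" by simp
    show "emeasure (distr M ?P ?\<Phi>) ?\<Omega> \<noteq> \<infinity>"
      by (simp add: emeasure_distr[OF \<Phi>] space_pair_measure[symmetric])
  next
    fix X assume X: "X \<in> ?E"
    then obtain a b where ab: "X = a \<times> b" "a \<in> prod_algebra A (\<lambda>_. \<mu>)" "b \<in> prod_algebra B (\<lambda>_. \<nu>)"
      by auto
    obtain Xa where Xa: "a = Pi\<^sub>E A Xa" "Xa \<in> (\<Pi> i\<in>A. sets \<mu>)"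
      using prod_algebraE_all[OF ab(2)] by blast
    obtain Xb where Xb: "b = Pi\<^sub>E B Xb" "Xb \<in> (\<Pi> j\<in>B. sets \<nu>)"
      using prod_algebraE_all[OF ab(3)] by blast
    have "X \<in> sets ?P" unfolding sets_eq using X by (rule sigma_sets.Basic)
    then show "emeasure (distr M ?P ?\<Phi>) X = emeasure ?P X"
      using emeasure_restrict_pair_rectangle[OF A B Xa(2) Xb(2)]
      by (simp add: emeasure_distr[OF \<Phi>] ab(1) Xa(1) Xb(1))
  qed
qed

lemma nn_integral_restrict_pair:
  assumes "finite A" "A \<subseteq> {1..}" "finite B" "B \<subseteq> {1..}"
    and "F \<in> borel_measurable (PiM A (\<lambda>_. \<mu>) \<Otimes>\<^sub>M PiM B (\<lambda>_. \<nu>))"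
  shows "(\<integral>\<^sup>+\<omega>. F (\<lambda>i\<in>A. \<xi> i \<omega>, \<lambda>j\<in>B. \<eta> j \<omega>) \<partial>M)
    = (\<integral>\<^sup>+z. F z \<partial>(PiM A (\<lambda>_. \<mu>) \<Otimes>\<^sub>M PiM B (\<lambda>_. \<nu>)))"
proof -
  have "(\<integral>\<^sup>+z. F z \<partial>(PiM A (\<lambda>_. \<mu>) \<Otimes>\<^sub>M PiM B (\<lambda>_. \<nu>)))
      = (\<integral>\<^sup>+z. F z \<partial>distr M (PiM A (\<lambda>_. \<mu>) \<Otimes>\<^sub>M PiM B (\<lambda>_. \<nu>))
            (\<lambda>\<omega>. (\<lambda>i\<in>A. \<xi> i \<omega>, \<lambda>j\<in>B. \<eta> j \<omega>)))"
    using assms by (simp add: distr_restrict_pair)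
  also have "\<dots> = (\<integral>\<^sup>+\<omega>. F (\<lambda>i\<in>A. \<xi> i \<omega>, \<lambda>j\<in>B. \<eta> j \<omega>) \<partial>M)"
    using assms by (intro nn_integral_distr measurable_restrict_pair) auto
  finally show ?thesis ..
qed

lemma distr_pair:
  assumes "a \<ge> 1" "b \<ge> 1"
  shows "distr M (\<mu> \<Otimes>\<^sub>M \<nu>) (\<lambda>\<omega>. (\<xi> a \<omega>, \<eta> b \<omega>)) = \<mu> \<Otimes>\<^sub>M \<nu>"
proof (rule pair_measure_eqI[symmetric])
  show "sigma_finite_measure \<mu>" "sigma_finite_measure \<nu>"
    by (auto intro: prob_space_imp_sigma_finite mu.prob_space_axioms nu.prob_space_axioms)
next
  fix X Y assume XY: "X \<in> sets \<mu>" "Y \<in> sets \<nu>"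
  note \<Phi> = measurable_pair_sample[OF assms]
  have "(\<lambda>\<omega>. (\<xi> a \<omega>, \<eta> b \<omega>)) -` (X \<times> Y) \<inter> space M = \<xi> a -` X \<inter> \<eta> b -` Y \<inter> space M" by auto
  moreover have "measure M (\<xi> a -` X \<inter> \<eta> b -` Y \<inter> space M) = measure \<mu> X * measure \<nu> Y"
    using measure_preimages_Int[of "{a}" "{b}" "\<lambda>_. X" "\<lambda>_. Y"] XY assms by simp
  ultimately show "emeasure \<mu> X * emeasure \<nu> Y = emeasure (distr M (\<mu> \<Otimes>\<^sub>M \<nu>) (\<lambda>\<omega>. (\<xi> a \<omega>, \<eta> b \<omega>))) (X \<times> Y)"
    using XY by (simp add: emeasure_distr[OF \<Phi>] M.emeasure_eq_measure mu.emeasure_eq_measure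
        nu.emeasure_eq_measure ennreal_mult)
qed simp

lemma
  fixes F :: "'x \<times> 'y \<Rightarrow> real"
  assumes ab: "a \<ge> 1" "b \<ge> 1"
    and [measurable]: "F \<in> borel_measurable (\<mu> \<Otimes>\<^sub>M \<nu>)"
    and F: "integrable (\<mu> \<Otimes>\<^sub>M \<nu>) (\<lambda>z. \<bar>F z\<bar> powr p)"
  shows integrable_abs_powr_pair: "integrable M (\<lambda>\<omega>. \<bar>F (\<xi> a \<omega>, \<eta> b \<omega>)\<bar> powr p)"
    and Lpn_pair: "Lpn M p (\<lambda>\<omega>. F (\<xi> a \<omega>, \<eta> b \<omega>)) = Lpn (\<mu> \<Otimes>\<^sub>M \<nu>) p F"
proof -
  note \<Phi> = measurable_pair_sample[OF ab]
  have "(\<lambda>z. \<bar>F z\<bar> powr p) \<in> borel_measurable (\<mu> \<Otimes>\<^sub>M \<nu>)" by measurable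
  note transfer = integrable_distr_eq[OF \<Phi> this] integral_distr[OF \<Phi> this]
  show "integrable M (\<lambda>\<omega>. \<bar>F (\<xi> a \<omega>, \<eta> b \<omega>)\<bar> powr p)"
    using transfer(1) F by (simp add: distr_pair[OF ab])
  show "Lpn M p (\<lambda>\<omega>. F (\<xi> a \<omega>, \<eta> b \<omega>)) = Lpn (\<mu> \<Otimes>\<^sub>M \<nu>) p F"
    using transfer(2) by (simp add: distr_pair[OF ab] Lpn_def)
qed

end

section \<open>The constant \<open>K\<^sub>R(p)\<close>\<close>

definition centered_Lp :: "'a measure \<Rightarrow> real \<Rightarrow> ('a \<Rightarrow> real) \<Rightarrow> bool" where
  "centered_Lp \<mu> p g \<longleftrightarrow> g \<in> borel_measurable \<mu> \<and> integrable \<mu> (\<lambda>x. \<bar>g x\<bar> powr p) \<and>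
     integrable \<mu> g \<and> (\<integral>x. g x \<partial>\<mu>) = 0"

definition iid_centered :: "'a measure \<Rightarrow> real \<Rightarrow> (nat \<Rightarrow> 'a \<Rightarrow> real) \<Rightarrow> nat \<Rightarrow> bool" where
  "iid_centered M p \<zeta> n \<longleftrightarrow> prob_space M \<and> 0 < n \<and>
     (\<forall>i<n. \<zeta> i \<in> borel_measurable M) \<and>
     prob_space.indep_vars M (\<lambda>_. borel) \<zeta> {..<n} \<and>
     (\<forall>i<n. distr M borel (\<zeta> i) = distr M borel (\<zeta> 0)) \<and>
     integrable M (\<lambda>\<omega>. \<bar>\<zeta> 0 \<omega>\<bar> powr p) \<and>
     integrable M (\<zeta> 0) \<and> (\<integral>\<omega>. \<zeta> 0 \<omega> \<partial>M) = 0"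

definition KR_admissible :: "real \<Rightarrow> real \<Rightarrow> bool" where
  "KR_admissible p K \<longleftrightarrow> (\<forall>(M :: (nat \<Rightarrow> real) measure) n c \<zeta>. iid_centered M p \<zeta> n \<longrightarrow>
     lpnorm M p (\<lambda>\<omega>. \<Sum>i<n. c i * \<zeta> i \<omega>)
       \<le> ereal K * ereal (sqrt (\<Sum>i<n. (c i)\<^sup>2)) * lpnorm M p (\<zeta> 0))"

lemma KR_eq_Inf: "KR p = Inf (ereal ` {K. KR_admissible p K})"
  unfolding KR_def KR_admissible_def iid_centered_def by (rule arg_cong[where f = Inf]) blast

lemma lpnorm_nonneg: "lpnorm M p f \<ge> 0"
  by (simp add: lpnorm_def)

lemma KR_admissible_mono:
  assumes "KR_admissible p K" "K \<le> K'"
  shows "KR_admissible p K'"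
  unfolding KR_admissible_def
proof (intro allI impI)
  fix M :: "(nat \<Rightarrow> real) measure" and n c \<zeta> assume "iid_centered M p \<zeta> n"
  then have "lpnorm M p (\<lambda>\<omega>. \<Sum>i<n. c i * \<zeta> i \<omega>) \<le> ereal K * ereal (sqrt (\<Sum>i<n. (c i)\<^sup>2)) * lpnorm M p (\<zeta> 0)"
    using assms(1) unfolding KR_admissible_def by blast
  also have "\<dots> \<le> ereal K' * ereal (sqrt (\<Sum>i<n. (c i)\<^sup>2)) * lpnorm M p (\<zeta> 0)"
    using assms(2) by (intro ereal_mult_right_mono lpnorm_nonneg) (auto simp: sum_nonneg)
  finally show "lpnorm M p (\<lambda>\<omega>. \<Sum>i<n. c i * \<zeta> i \<omega>)
      \<le> ereal K' * ereal (sqrt (\<Sum>i<n. (c i)\<^sup>2)) * lpnorm M p (\<zeta> 0)" .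
qed

text \<open>Independent copies are the coordinates of a product space. The restriction to at most
  \<open>m\<close> copies lets \<open>K = \<surd>m\<close> qualify without any independence.\<close>
definition iid_moment_bound :: "'x measure \<Rightarrow> real \<Rightarrow> real \<Rightarrow> nat \<Rightarrow> bool" where
  "iid_moment_bound \<mu> p K m \<longleftrightarrow> (\<forall>g (A::nat set) c. centered_Lp \<mu> p g \<and> finite A \<and> A \<noteq> {} \<and> card A \<le> m \<longrightarrow>
     integrable (PiM A (\<lambda>_. \<mu>)) (\<lambda>x. \<bar>\<Sum>a\<in>A. c a * g (x a)\<bar> powr p) \<and>
     (\<integral>x. \<bar>\<Sum>a\<in>A. c a * g (x a)\<bar> powr p \<partial>PiM A (\<lambda>_. \<mu>))
       \<le> (K * sqrt (\<Sum>a\<in>A. (c a)\<^sup>2)) powr p * (\<integral>x. \<bar>g x\<bar> powr p \<partial>\<mu>))"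

lemma iid_moment_boundD:
  fixes A :: "nat set"
  assumes "iid_moment_bound \<mu> p K m" "centered_Lp \<mu> p g" "finite A" "A \<noteq> {}" "card A \<le> m"
  shows "integrable (PiM A (\<lambda>_. \<mu>)) (\<lambda>x. \<bar>\<Sum>a\<in>A. c a * g (x a)\<bar> powr p)"
    and "(\<integral>x. \<bar>\<Sum>a\<in>A. c a * g (x a)\<bar> powr p \<partial>PiM A (\<lambda>_. \<mu>))
      \<le> (K * sqrt (\<Sum>a\<in>A. (c a)\<^sup>2)) powr p * (\<integral>x. \<bar>g x\<bar> powr p \<partial>\<mu>)"
  using assms(1)[unfolded iid_moment_bound_def, rule_format, of g A c] assms(2-) by auto

lemma
  fixes F :: "'b \<Rightarrow> real"
  assumes mu: "prob_space \<mu>" and a: "a \<in> A" and F: "F \<in> borel_measurable \<mu>"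
  shows integrable_PiM_component: "integrable (PiM A (\<lambda>_. \<mu>)) (\<lambda>x. F (x a)) \<longleftrightarrow> integrable \<mu> F"
    and integral_PiM_component: "(\<integral>x. F (x a) \<partial>PiM A (\<lambda>_. \<mu>)) = (\<integral>x. F x \<partial>\<mu>)"
proof -
  have comp: "(\<lambda>x. x a) \<in> PiM A (\<lambda>_. \<mu>) \<rightarrow>\<^sub>M \<mu>"
    using a by (intro measurable_component_singleton)
  have "distr (PiM A (\<lambda>_. \<mu>)) \<mu> (\<lambda>x. x a) = \<mu>"
    using mu a by (intro distr_PiM_component) auto
  then show "integrable (PiM A (\<lambda>_. \<mu>)) (\<lambda>x. F (x a)) \<longleftrightarrow> integrable \<mu> F"
    "(\<integral>x. F (x a) \<partial>PiM A (\<lambda>_. \<mu>)) = (\<integral>x. F x \<partial>\<mu>)"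
    using integrable_distr_eq[OF comp F] integral_distr[OF comp F] by simp_all
qed

lemma measurable_padded_copies:
  fixes n :: nat
  assumes g: "g \<in> borel_measurable \<mu>" and e: "\<And>i. i < n \<Longrightarrow> e i \<in> A"
  shows "(\<lambda>x i. if i < n then g (x (e i)) else 0) \<in> PiM A (\<lambda>_. \<mu>) \<rightarrow>\<^sub>M PiM UNIV (\<lambda>_. borel)"
proof (rule measurable_PiM_single')
  fix i :: nat
  show "(\<lambda>x. if i < n then g (x (e i)) else 0) \<in> borel_measurable (PiM A (\<lambda>_. \<mu>))"
    using measurable_compose[OF measurable_component_singleton[OF e] g] by (cases "i < n") auto
qed auto

text \<open>\<open>KR\<close> only quantifies over probability spaces on \<open>nat \<Rightarrow> real\<close>, so the copies are
  relabelled by \<open>{..<n}\<close>, padded by zeros and transported there.\<close>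
lemma iid_centered_distr_coordinates:
  assumes mu: "prob_space \<mu>" and g: "centered_Lp \<mu> p g"
    and e: "bij_betw e {..<n} A" and n: "0 < n"
  defines "T \<equiv> \<lambda>x i. if i < n then g (x (e i)) else 0"
  shows "iid_centered (distr (PiM A (\<lambda>_. \<mu>)) (PiM UNIV (\<lambda>_. borel)) T) p (\<lambda>i \<omega>. \<omega> i) n"
proof -
  let ?P = "PiM A (\<lambda>_. \<mu>)" and ?S = "PiM UNIV (\<lambda>_. borel) :: (nat \<Rightarrow> real) measure"
  interpret P: prob_space ?P using mu by (intro prob_space_PiM) auto
  have gm[measurable]: "g \<in> borel_measurable \<mu>" using g by (simp add: centered_Lp_def)
  have eA: "e i \<in> A" if "i < n" for i using e that by (auto simp: bij_betw_def)
  have Tm: "T \<in> ?P \<rightarrow>\<^sub>M ?S"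
    unfolding T_def using gm eA by (rule measurable_padded_copies)
  have coord: "(\<lambda>\<omega>. \<omega> i) \<in> borel_measurable ?S" for i
    by (rule measurable_component_singleton) auto
  have law: "distr (distr ?P ?S T) borel (\<lambda>\<omega>. \<omega> i) = distr \<mu> borel g" if "i < n" for i
  proof -
    have "distr (distr ?P ?S T) borel (\<lambda>\<omega>. \<omega> i) = distr ?P borel (\<lambda>x. g (x (e i)))"
      using coord Tm that by (simp add: distr_distr comp_def T_def)
    also have "\<dots> = distr (distr ?P \<mu> (\<lambda>x. x (e i))) borel g"
      using eA[OF that] by (simp add: distr_distr comp_def measurable_component_singleton)
    also have "\<dots> = distr \<mu> borel g"
      using mu eA[OF that] by (subst distr_PiM_component) auto
    finally show ?thesis .
  qed
  have transfer: "integrable (distr ?P ?S T) (\<lambda>\<omega>. F (\<omega> 0)) \<longleftrightarrow> integrable \<mu> (\<lambda>x. F (g x))"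
    "(\<integral>\<omega>. F (\<omega> 0) \<partial>distr ?P ?S T) = (\<integral>x. F (g x) \<partial>\<mu>)"
    if [measurable]: "F \<in> borel_measurable borel" for F :: "real \<Rightarrow> real"
  proof -
    have Fm: "(\<lambda>\<omega>. F (\<omega> 0)) \<in> borel_measurable ?S" using coord by measurable
    show "integrable (distr ?P ?S T) (\<lambda>\<omega>. F (\<omega> 0)) \<longleftrightarrow> integrable \<mu> (\<lambda>x. F (g x))"
      "(\<integral>\<omega>. F (\<omega> 0) \<partial>distr ?P ?S T) = (\<integral>x. F (g x) \<partial>\<mu>)"
      using integrable_distr_eq[OF Tm Fm] integral_distr[OF Tm Fm] n eA[OF n]
        integrable_PiM_component[OF mu eA[OF n], of "\<lambda>x. F (g x)"]
        integral_PiM_component[OF mu eA[OF n], of "\<lambda>x. F (g x)"]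
      by (simp_all add: T_def)
  qed
  have indep: "prob_space.indep_vars (distr ?P ?S T) (\<lambda>_. borel) (\<lambda>i \<omega>. \<omega> i) {..<n}"
  proof (rule indep_vars_distr[OF P.prob_space_axioms Tm])
    have "prob_space.indep_vars ?P (\<lambda>_. borel) (\<lambda>i x. g (x (e i))) {..<n}"
      using P.indep_vars_compose2[OF indep_vars_PiM_reindex[OF mu e n], of "\<lambda>_. g" "\<lambda>_. borel"]
      by auto
    then show "prob_space.indep_vars ?P (\<lambda>_. borel) (\<lambda>i x. T x i) {..<n}"
      by (rule P.indep_vars_cong[THEN iffD1, rotated 3]) (auto simp: T_def)
  qed (use n coord in auto)
  show ?thesis
    unfolding iid_centered_def
    using P.prob_space_distr[OF Tm] n coord indep law transfer[of "\<lambda>t. \<bar>t\<bar> powr p"] transfer[of "\<lambda>t. t"] g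
    by (auto simp: centered_Lp_def)
qed

lemma iid_moment_bound_if_KR_admissible:
  assumes K: "KR_admissible p K" and p: "p \<ge> 1" and mu: "prob_space \<mu>"
  shows "iid_moment_bound \<mu> p \<bar>K\<bar> m"
  unfolding iid_moment_bound_def
proof (intro allI impI conjI)
  fix g :: "'a \<Rightarrow> real" and A :: "nat set" and c
  assume "centered_Lp \<mu> p g \<and> finite A \<and> A \<noteq> {} \<and> card A \<le> m"
  then have g: "centered_Lp \<mu> p g" and A: "finite A" "A \<noteq> {}" by auto
  let ?P = "PiM A (\<lambda>_. \<mu>)" and ?S = "PiM UNIV (\<lambda>_. borel) :: (nat \<Rightarrow> real) measure"
  define n where "n = card A"
  have n: "0 < n" using A by (simp add: n_def card_gt_0_iff)
  obtain e where e: "bij_betw e {..<n} A"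
    using ex_bij_betw_nat_finite[OF A(1)] by (auto simp: n_def atLeast0LessThan)
  have eA: "e i \<in> A" if "i < n" for i using e that by (auto simp: bij_betw_def)
  define T where "T = (\<lambda>x i. if i < n then g (x (e i)) else 0)"
  define N where "N = distr ?P ?S T"
  have iid: "iid_centered N p (\<lambda>i \<omega>. \<omega> i) n"
    unfolding N_def T_def by (rule iid_centered_distr_coordinates[OF mu g e n])
  have gm[measurable]: "g \<in> borel_measurable \<mu>" using g by (simp add: centered_Lp_def)
  have Tm: "T \<in> ?P \<rightarrow>\<^sub>M ?S"
    unfolding T_def using gm eA by (rule measurable_padded_copies)
  define S where "S = (\<lambda>\<omega>::nat \<Rightarrow> real. \<bar>\<Sum>i<n. c (e i) * \<omega> i\<bar> powr p)"
  have Sm: "S \<in> borel_measurable ?S"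
    unfolding S_def by measurable
  have "(\<Sum>i<n. c (e i) * T x i) = (\<Sum>a\<in>A. c a * g (x a))" for x
    using sum.reindex_bij_betw[OF e, of "\<lambda>a. c a * g (x a)"] by (simp add: T_def)
  then have ST: "S (T x) = \<bar>\<Sum>a\<in>A. c a * g (x a)\<bar> powr p" for x by (simp add: S_def)
  have sq: "(\<Sum>i<n. (c (e i))\<^sup>2) = (\<Sum>a\<in>A. (c a)\<^sup>2)"
    using sum.reindex_bij_betw[OF e, of "\<lambda>a. (c a)\<^sup>2"] by simp
  define G where "G = (\<integral>x. \<bar>g x\<bar> powr p \<partial>\<mu>)"
  have G0: "G \<ge> 0" unfolding G_def by (intro integral_nonneg_AE) auto
  have "lpnorm N p (\<lambda>\<omega>. \<Sum>i<n. c (e i) * \<omega> i)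
      \<le> ereal K * ereal (sqrt (\<Sum>i<n. (c (e i))\<^sup>2)) * lpnorm N p (\<lambda>\<omega>. \<omega> 0)"
    using K[unfolded KR_admissible_def, rule_format, OF iid, where c = "\<lambda>i. c (e i)"] by simp
  moreover have "lpnorm N p (\<lambda>\<omega>. \<omega> 0) = ereal (G powr (1 / p))"
    using iid integral_distr[OF Tm, of "\<lambda>\<omega>. \<bar>\<omega> 0\<bar> powr p"] n eA[OF n]
      integral_PiM_component[OF mu eA[OF n], of "\<lambda>x. \<bar>g x\<bar> powr p"]
    by (auto simp: lpnorm_def iid_centered_def N_def T_def G_def measurable_component_singleton)
  ultimately have bound: "lpnorm N p (\<lambda>\<omega>. \<Sum>i<n. c (e i) * \<omega> i)
      \<le> ereal (K * sqrt (\<Sum>a\<in>A. (c a)\<^sup>2) * G powr (1 / p))"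
    by (simp add: sq)
  then have "integrable N S"
    unfolding lpnorm_def S_def by (auto split: if_splits)
  then show "integrable ?P (\<lambda>x. \<bar>\<Sum>a\<in>A. c a * g (x a)\<bar> powr p)"
    using integrable_distr_eq[OF Tm Sm] by (simp add: N_def ST)
  have "Lpn ?P p (\<lambda>x. \<Sum>a\<in>A. c a * g (x a)) \<le> K * sqrt (\<Sum>a\<in>A. (c a)\<^sup>2) * G powr (1 / p)"
    using bound \<open>integrable N S\<close> integral_distr[OF Tm Sm]
    by (simp add: lpnorm_def Lpn_def N_def ST S_def[symmetric])
  also have "\<dots> \<le> \<bar>K\<bar> * sqrt (\<Sum>a\<in>A. (c a)\<^sup>2) * G powr (1 / p)"
    by (intro mult_right_mono) (auto simp: sum_nonneg)
  finally have Lpn_bound: "Lpn ?P p (\<lambda>x. \<Sum>a\<in>A. c a * g (x a))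
      \<le> \<bar>K\<bar> * sqrt (\<Sum>a\<in>A. (c a)\<^sup>2) * G powr (1 / p)" .
  show "(\<integral>x. \<bar>\<Sum>a\<in>A. c a * g (x a)\<bar> powr p \<partial>?P) \<le> (\<bar>K\<bar> * sqrt (\<Sum>a\<in>A. (c a)\<^sup>2)) powr p * G"
    by (rule integral_abs_powr_le_if_Lpn_le[OF _ _ G0 Lpn_bound]) (use p in \<open>auto simp: sum_nonneg\<close>)
qed

lemma iid_moment_bound_sqrt_card:
  assumes p: "p \<ge> 1" and mu: "prob_space \<mu>"
  shows "iid_moment_bound \<mu> p (sqrt (real m)) m"
  unfolding iid_moment_bound_def
proof (intro allI impI conjI)
  fix g :: "'a \<Rightarrow> real" and A :: "nat set" and c
  assume "centered_Lp \<mu> p g \<and> finite A \<and> A \<noteq> {} \<and> card A \<le> m"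
  then have g: "centered_Lp \<mu> p g" and A: "finite A" "card A \<le> m" by auto
  let ?P = "PiM A (\<lambda>_. \<mu>)"
  have gm[measurable]: "g \<in> borel_measurable \<mu>" and gp: "integrable \<mu> (\<lambda>x. \<bar>g x\<bar> powr p)"
    using g by (auto simp: centered_Lp_def)
  have fm: "(\<lambda>x. c a * g (x a)) \<in> borel_measurable ?P" if "a \<in> A" for a
    using measurable_compose[OF measurable_component_singleton[OF that] gm] by simp
  have fi: "integrable ?P (\<lambda>x. \<bar>c a * g (x a)\<bar> powr p)" if "a \<in> A" for a
    using integrable_abs_powr_cmult integrable_PiM_component[OF mu that, of "\<lambda>x. \<bar>g x\<bar> powr p"] gp
    by auto
  show "integrable ?P (\<lambda>x. \<bar>\<Sum>a\<in>A. c a * g (x a)\<bar> powr p)"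
    using integrable_abs_powr_sum[OF p A(1) fm fi] .
  define G where "G = (\<integral>x. \<bar>g x\<bar> powr p \<partial>\<mu>)"
  have G0: "G \<ge> 0" unfolding G_def by (intro integral_nonneg_AE) auto
  have each: "Lpn ?P p (\<lambda>x. c a * g (x a)) = \<bar>c a\<bar> * G powr (1 / p)" if "a \<in> A" for a
    using p integral_PiM_component[OF mu that, of "\<lambda>x. \<bar>g x\<bar> powr p"]
    by (simp add: Lpn_cmult[where f = "\<lambda>x. g (x a)"]) (simp add: Lpn_def G_def)
  have "(\<Sum>a\<in>A. \<bar>c a\<bar>)\<^sup>2 \<le> real m * (\<Sum>a\<in>A. (c a)\<^sup>2)"
  proof -
    have "(\<Sum>a\<in>A. \<bar>c a\<bar> * 1)\<^sup>2 \<le> (\<Sum>a\<in>A. \<bar>c a\<bar>\<^sup>2) * (\<Sum>a\<in>A. 1\<^sup>2)"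
      by (rule Cauchy_Schwarz_ineq_sum)
    also have "\<dots> \<le> (\<Sum>a\<in>A. (c a)\<^sup>2) * real m"
      using A by (simp add: mult_left_mono sum_nonneg)
    finally show ?thesis by (simp add: mult.commute)
  qed
  then have "(\<Sum>a\<in>A. \<bar>c a\<bar>) \<le> sqrt (real m) * sqrt (\<Sum>a\<in>A. (c a)\<^sup>2)"
    by (metis real_sqrt_le_mono real_sqrt_mult real_sqrt_abs abs_of_nonneg sum_nonneg abs_ge_zero)
  have "Lpn ?P p (\<lambda>x. \<Sum>a\<in>A. c a * g (x a)) \<le> (\<Sum>a\<in>A. Lpn ?P p (\<lambda>x. c a * g (x a)))"
    by (rule Lpn_sum_le[OF p A(1) fm fi])
  also have "\<dots> = (\<Sum>a\<in>A. \<bar>c a\<bar>) * G powr (1 / p)"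
    using each by (simp add: sum_distrib_right)
  also have "\<dots> \<le> sqrt (real m) * sqrt (\<Sum>a\<in>A. (c a)\<^sup>2) * G powr (1 / p)"
    using \<open>(\<Sum>a\<in>A. \<bar>c a\<bar>) \<le> _\<close> G0 by (intro mult_right_mono) auto
  finally have Lpn_bound: "Lpn ?P p (\<lambda>x. \<Sum>a\<in>A. c a * g (x a))
      \<le> sqrt (real m) * sqrt (\<Sum>a\<in>A. (c a)\<^sup>2) * G powr (1 / p)" .
  show "(\<integral>x. \<bar>\<Sum>a\<in>A. c a * g (x a)\<bar> powr p \<partial>?P)
      \<le> (sqrt (real m) * sqrt (\<Sum>a\<in>A. (c a)\<^sup>2)) powr p * (\<integral>x. \<bar>g x\<bar> powr p \<partial>\<mu>)"
    unfolding G_def[symmetric]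
    by (rule integral_abs_powr_le_if_Lpn_le[OF _ _ G0 Lpn_bound]) (use p in \<open>auto simp: sum_nonneg\<close>)
qed

section \<open>Decoupled bilinear sums\<close>

lemma
  fixes C :: "'i \<Rightarrow> 'a \<Rightarrow> real"
  assumes p: "p \<ge> 2" and A: "finite A"
    and C: "\<And>a. a \<in> A \<Longrightarrow> C a \<in> borel_measurable N"
      "\<And>a. a \<in> A \<Longrightarrow> integrable N (\<lambda>y. \<bar>C a y\<bar> powr p)"
    and \<beta>: "\<And>a. a \<in> A \<Longrightarrow> (\<integral>y. \<bar>C a y\<bar> powr p \<partial>N) \<le> \<beta> a"
  shows integrable_sum_squares_powr: "integrable N (\<lambda>y. (\<Sum>a\<in>A. (C a y)\<^sup>2) powr (p / 2))"
    and integral_sum_squares_powr_le: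
      "(\<integral>y. (\<Sum>a\<in>A. (C a y)\<^sup>2) powr (p / 2) \<partial>N) \<le> (\<Sum>a\<in>A. \<beta> a powr (2 / p)) powr (p / 2)"
proof -
  define q where "q = p / 2"
  have q: "q \<ge> 1" using p by (simp add: q_def)
  have sq_m: "(\<lambda>y. (C a y)\<^sup>2) \<in> borel_measurable N" if "a \<in> A" for a
    using C(1)[OF that] by measurable
  have sq_i: "integrable N (\<lambda>y. \<bar>(C a y)\<^sup>2\<bar> powr q)" if "a \<in> A" for a
    using C(2)[OF that] p by (simp add: q_def power2_powr_half)
  have abs_sum: "\<bar>\<Sum>a\<in>A. (C a y)\<^sup>2\<bar> = (\<Sum>a\<in>A. (C a y)\<^sup>2)" for y by (simp add: sum_nonneg)
  have "integrable N (\<lambda>y. \<bar>\<Sum>a\<in>A. (C a y)\<^sup>2\<bar> powr q)"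
    by (rule integrable_abs_powr_sum[OF q A]) (use sq_m sq_i in auto)
  then show "integrable N (\<lambda>y. (\<Sum>a\<in>A. (C a y)\<^sup>2) powr (p / 2))"
    by (simp add: abs_sum q_def)
  have each: "Lpn N q (\<lambda>y. (C a y)\<^sup>2) \<le> \<beta> a powr (2 / p)" if "a \<in> A" for a
  proof -
    have "Lpn N q (\<lambda>y. (C a y)\<^sup>2) = (\<integral>y. \<bar>C a y\<bar> powr p \<partial>N) powr (2 / p)"
      using p by (simp add: Lpn_def q_def power2_powr_half)
    also have "\<dots> \<le> \<beta> a powr (2 / p)"
      using \<beta>[OF that] p by (intro powr_mono2) (auto intro!: integral_nonneg_AE)
    finally show ?thesis .
  qed
  have "Lpn N q (\<lambda>y. \<Sum>a\<in>A. (C a y)\<^sup>2) \<le> (\<Sum>a\<in>A. Lpn N q (\<lambda>y. (C a y)\<^sup>2))"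
    by (rule Lpn_sum_le[OF q A]) (use sq_m sq_i in auto)
  also have "\<dots> \<le> (\<Sum>a\<in>A. \<beta> a powr (2 / p))"
    using each by (rule sum_mono)
  finally have "Lpn N q (\<lambda>y. \<Sum>a\<in>A. (C a y)\<^sup>2) \<le> (\<Sum>a\<in>A. \<beta> a powr (2 / p))" .
  then have "Lpn N q (\<lambda>y. \<Sum>a\<in>A. (C a y)\<^sup>2) powr q \<le> (\<Sum>a\<in>A. \<beta> a powr (2 / p)) powr q"
    using q by (intro powr_mono2) (auto simp: Lpn_nonneg)
  then show "(\<integral>y. (\<Sum>a\<in>A. (C a y)\<^sup>2) powr (p / 2) \<partial>N) \<le> (\<Sum>a\<in>A. \<beta> a powr (2 / p)) powr (p / 2)"
    using q by (simp add: Lpn_powr abs_sum q_def)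
qed

lemma nn_integral_weighted_copies_le:
  fixes A :: "nat set"
  assumes H: "iid_moment_bound \<mu> p K m" and K: "K \<ge> 0" and g: "centered_Lp \<mu> p g"
    and A: "finite A" "A \<noteq> {}" "card A \<le> m"
  shows "(\<integral>\<^sup>+x. \<bar>\<Sum>a\<in>A. c a * g (x a)\<bar> powr p \<partial>PiM A (\<lambda>_. \<mu>))
    \<le> ennreal (K powr p * (\<Sum>a\<in>A. (c a)\<^sup>2) powr (p / 2) * (\<integral>x. \<bar>g x\<bar> powr p \<partial>\<mu>))"
proof -
  note bound = iid_moment_boundD[OF H g A, of c]
  have "(\<integral>\<^sup>+x. \<bar>\<Sum>a\<in>A. c a * g (x a)\<bar> powr p \<partial>PiM A (\<lambda>_. \<mu>))
      = ennreal (\<integral>x. \<bar>\<Sum>a\<in>A. c a * g (x a)\<bar> powr p \<partial>PiM A (\<lambda>_. \<mu>))"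
    using bound(1) by (intro nn_integral_eq_integral) auto
  also have "\<dots> \<le> ennreal ((K * sqrt (\<Sum>a\<in>A. (c a)\<^sup>2)) powr p * (\<integral>x. \<bar>g x\<bar> powr p \<partial>\<mu>))"
    using bound(2) by (rule ennreal_leI)
  also have "(K * sqrt (\<Sum>a\<in>A. (c a)\<^sup>2)) powr p = K powr p * (\<Sum>a\<in>A. (c a)\<^sup>2) powr (p / 2)"
    using K by (simp add: powr_mult sqrt_powr sum_nonneg)
  finally show ?thesis .
qed

lemma
  fixes h :: "'y \<Rightarrow> real" and R :: "'i \<Rightarrow> nat set"
  assumes p: "p \<ge> 2" and K: "K \<ge> 0"
    and Hh: "iid_moment_bound \<nu> p K m" and h: "centered_Lp \<nu> p h"
    and A: "finite A" and B: "finite B" "B \<noteq> {}" "card B \<le> m" and R: "\<And>a. R a \<subseteq> B"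
  shows integrable_row_sums:
      "integrable (PiM B (\<lambda>_. \<nu>)) (\<lambda>y. (\<Sum>a\<in>A. (\<Sum>b\<in>R a. h (y b))\<^sup>2) powr (p / 2))"
    and integral_row_sums_le:
      "(\<integral>y. (\<Sum>a\<in>A. (\<Sum>b\<in>R a. h (y b))\<^sup>2) powr (p / 2) \<partial>PiM B (\<lambda>_. \<nu>))
        \<le> K powr p * (\<Sum>a\<in>A. real (card (R a))) powr (p / 2) * (\<integral>y. \<bar>h y\<bar> powr p \<partial>\<nu>)"
proof -
  let ?P = "PiM B (\<lambda>_. \<nu>)"
  define H where "H = (\<integral>y. \<bar>h y\<bar> powr p \<partial>\<nu>)"
  have H: "H \<ge> 0" unfolding H_def by (auto intro!: integral_nonneg_AE)
  have hm: "h \<in> borel_measurable \<nu>" using h by (simp add: centered_Lp_def)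
  have hb: "(\<lambda>y. h (y b)) \<in> borel_measurable ?P" if "b \<in> B" for b
    using measurable_compose[OF measurable_component_singleton[OF that] hm] .
  define C where "C = (\<lambda>a y. \<Sum>b\<in>R a. h (y b))"
  have Cm: "C a \<in> borel_measurable ?P" for a
    unfolding C_def using R hb by (intro borel_measurable_sum) auto
  have C_weights: "C a y = (\<Sum>b\<in>B. (if b \<in> R a then 1 else 0) * h (y b))" for a y
    unfolding C_def using R B(1) by (intro sum.mono_neutral_cong_left) auto
  have weights_sq: "(\<Sum>b\<in>B. (if b \<in> R a then 1 else 0 :: real)\<^sup>2) = real (card (R a))" for a
    using R B(1) by (subst sum.mono_neutral_cong_right[of B "R a" _ "\<lambda>_. 1"]) auto
  have Ci: "integrable ?P (\<lambda>y. \<bar>C a y\<bar> powr p)"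
    and Cb: "(\<integral>y. \<bar>C a y\<bar> powr p \<partial>?P) \<le> (K * sqrt (real (card (R a)))) powr p * H" for a
    using iid_moment_boundD[OF Hh h B, of "\<lambda>b. if b \<in> R a then 1 else 0"]
    unfolding C_weights[symmetric] weights_sq H_def by simp_all
  have "((K * sqrt (real (card (R a)))) powr p * H) powr (2 / p)
      = K powr 2 * real (card (R a)) * H powr (2 / p)" for a
    using p K H by (simp add: powr_mult powr_powr sqrt_powr)
  then have "(\<Sum>a\<in>A. ((K * sqrt (real (card (R a)))) powr p * H) powr (2 / p)) powr (p / 2)
      = (K powr 2 * (\<Sum>a\<in>A. real (card (R a))) * H powr (2 / p)) powr (p / 2)"
    by (simp add: sum_distrib_left sum_distrib_right)
  also have "\<dots> = K powr p * (\<Sum>a\<in>A. real (card (R a))) powr (p / 2) * H"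
    using p K H by (simp add: powr_mult powr_powr power2_powr_half sum_nonneg)
  finally have bound: "(\<Sum>a\<in>A. ((K * sqrt (real (card (R a)))) powr p * H) powr (2 / p)) powr (p / 2)
      = K powr p * (\<Sum>a\<in>A. real (card (R a))) powr (p / 2) * H" .
  have "integrable ?P (\<lambda>y. (\<Sum>a\<in>A. (C a y)\<^sup>2) powr (p / 2))"
    by (rule integrable_sum_squares_powr[OF p A]) (use Cm Ci Cb in auto)
  then show "integrable ?P (\<lambda>y. (\<Sum>a\<in>A. (\<Sum>b\<in>R a. h (y b))\<^sup>2) powr (p / 2))"
    by (simp add: C_def)
  have "(\<integral>y. (\<Sum>a\<in>A. (C a y)\<^sup>2) powr (p / 2) \<partial>?P)
      \<le> (\<Sum>a\<in>A. ((K * sqrt (real (card (R a)))) powr p * H) powr (2 / p)) powr (p / 2)"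
    by (rule integral_sum_squares_powr_le[OF p A]) (use Cm Ci Cb in auto)
  then show "(\<integral>y. (\<Sum>a\<in>A. (\<Sum>b\<in>R a. h (y b))\<^sup>2) powr (p / 2) \<partial>?P)
      \<le> K powr p * (\<Sum>a\<in>A. real (card (R a))) powr (p / 2) * (\<integral>y. \<bar>h y\<bar> powr p \<partial>\<nu>)"
    using bound by (simp add: C_def H_def[symmetric])
qed

lemma measurable_bilinear_PiM:
  fixes g :: "'x \<Rightarrow> real" and h :: "'y \<Rightarrow> real" and R :: "nat \<Rightarrow> nat set"
  assumes g: "g \<in> borel_measurable \<mu>" and h: "h \<in> borel_measurable \<nu>" and R: "\<And>a. R a \<subseteq> B"
  shows "(\<lambda>z. \<bar>\<Sum>a\<in>A. (\<Sum>b\<in>R a. h (snd z b)) * g (fst z a)\<bar> powr p)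
    \<in> borel_measurable (PiM A (\<lambda>_. \<mu>) \<Otimes>\<^sub>M PiM B (\<lambda>_. \<nu>))"
proof -
  let ?P1 = "PiM A (\<lambda>_. \<mu>)" and ?P2 = "PiM B (\<lambda>_. \<nu>)"
  let ?P = "?P1 \<Otimes>\<^sub>M ?P2"
  have "(\<lambda>z. g (fst z a)) \<in> borel_measurable ?P" if "a \<in> A" for a
    using measurable_compose[OF measurable_fst[of ?P1 ?P2]
        measurable_compose[OF measurable_component_singleton[OF that] g]]
    by simp
  moreover have "(\<lambda>z. h (snd z b)) \<in> borel_measurable ?P" if "b \<in> B" for b
    using measurable_compose[OF measurable_snd[of ?P1 ?P2]
        measurable_compose[OF measurable_component_singleton[OF that] h]]
    by simp
  ultimately have "(\<lambda>z. \<Sum>a\<in>A. (\<Sum>b\<in>R a. h (snd z b)) * g (fst z a)) \<in> borel_measurable ?P"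
    using R by (intro borel_measurable_sum borel_measurable_times) auto
  then show ?thesis by measurable
qed

text \<open>For fixed \<open>y\<close>, the inner integral is a weighted sum of independent copies of \<open>g\<close> with
  weights \<open>C\<^sub>a = \<Sum>b\<in>R a. h (y b)\<close>; what remains is \<open>\<integral>(\<Sum>\<^sub>a C\<^sub>a\<^sup>2)\<^bsup>p/2\<^esup>\<close>.\<close>
lemma nn_integral_bilinear_PiM_le:
  fixes g :: "'x \<Rightarrow> real" and h :: "'y \<Rightarrow> real" and A B :: "nat set" and R :: "nat \<Rightarrow> nat set"
  assumes p: "p \<ge> 2" and K: "K \<ge> 0" and mu: "prob_space \<mu>" and nu: "prob_space \<nu>"
    and Hg: "iid_moment_bound \<mu> p K m" and Hh: "iid_moment_bound \<nu> p K m"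
    and g: "centered_Lp \<mu> p g" and h: "centered_Lp \<nu> p h"
    and A: "finite A" "A \<noteq> {}" "card A \<le> m" and B: "finite B" "B \<noteq> {}" "card B \<le> m"
    and R: "\<And>a. R a \<subseteq> B"
  shows "(\<integral>\<^sup>+z. \<bar>\<Sum>a\<in>A. (\<Sum>b\<in>R a. h (snd z b)) * g (fst z a)\<bar> powr p \<partial>(PiM A (\<lambda>_. \<mu>) \<Otimes>\<^sub>M PiM B (\<lambda>_. \<nu>)))
    \<le> ennreal (K powr p * K powr p * (\<Sum>a\<in>A. real (card (R a))) powr (p / 2)
        * (\<integral>x. \<bar>g x\<bar> powr p \<partial>\<mu>) * (\<integral>y. \<bar>h y\<bar> powr p \<partial>\<nu>))"
proof -
  let ?P1 = "PiM A (\<lambda>_. \<mu>)" and ?P2 = "PiM B (\<lambda>_. \<nu>)"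
  interpret P1: prob_space ?P1 using mu by (intro prob_space_PiM) auto
  interpret P2: prob_space ?P2 using nu by (intro prob_space_PiM) auto
  interpret P: pair_prob_space ?P1 ?P2 ..
  have gm: "g \<in> borel_measurable \<mu>" and hm: "h \<in> borel_measurable \<nu>"
    using g h by (auto simp: centered_Lp_def)
  define G where "G = (\<integral>x. \<bar>g x\<bar> powr p \<partial>\<mu>)"
  define H where "H = (\<integral>y. \<bar>h y\<bar> powr p \<partial>\<nu>)"
  have GH: "G \<ge> 0" "H \<ge> 0" unfolding G_def H_def by (auto intro!: integral_nonneg_AE)
  define C where "C = (\<lambda>a y. \<Sum>b\<in>R a. h (y b))"
  have hb: "(\<lambda>y. h (y b)) \<in> borel_measurable ?P2" if "b \<in> B" for b
    using measurable_compose[OF measurable_component_singleton[OF that] hm] .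
  have Cm: "(\<lambda>y. \<Sum>a\<in>A. (C a y)\<^sup>2) \<in> borel_measurable ?P2"
    unfolding C_def using R hb by (intro borel_measurable_sum borel_measurable_power) auto
  have inner: "(\<integral>\<^sup>+x. \<bar>\<Sum>a\<in>A. C a y * g (x a)\<bar> powr p \<partial>?P1)
      \<le> ennreal (K powr p * G) * ennreal ((\<Sum>a\<in>A. (C a y)\<^sup>2) powr (p / 2))" for y
    using nn_integral_weighted_copies_le[OF Hg K g A, of "\<lambda>a. C a y"] GH
    by (simp add: G_def[symmetric] ennreal_mult[symmetric] mult_ac)
  have outer: "(\<integral>\<^sup>+y. ennreal ((\<Sum>a\<in>A. (C a y)\<^sup>2) powr (p / 2)) \<partial>?P2)
      \<le> ennreal (K powr p * (\<Sum>a\<in>A. real (card (R a))) powr (p / 2) * H)"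
    using integrable_row_sums[where R = R, OF p K Hh h A(1) B R]
      integral_row_sums_le[where R = R, OF p K Hh h A(1) B R]
    by (simp add: C_def H_def nn_integral_eq_integral ennreal_leI)
  have "(\<integral>\<^sup>+z. \<bar>\<Sum>a\<in>A. (\<Sum>b\<in>R a. h (snd z b)) * g (fst z a)\<bar> powr p \<partial>(?P1 \<Otimes>\<^sub>M ?P2))
      = (\<integral>\<^sup>+y. \<integral>\<^sup>+x. \<bar>\<Sum>a\<in>A. C a y * g (x a)\<bar> powr p \<partial>?P1 \<partial>?P2)"
    using measurable_bilinear_PiM[where R = R, OF gm hm R, of A p]
    by (subst P.nn_integral_snd[symmetric]) (auto simp: C_def)
  also have "\<dots> \<le> (\<integral>\<^sup>+y. ennreal (K powr p * G) * ennreal ((\<Sum>a\<in>A. (C a y)\<^sup>2) powr (p / 2)) \<partial>?P2)"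
    using inner by (intro nn_integral_mono) auto
  also have "\<dots> = ennreal (K powr p * G) * (\<integral>\<^sup>+y. ennreal ((\<Sum>a\<in>A. (C a y)\<^sup>2) powr (p / 2)) \<partial>?P2)"
  proof (rule nn_integral_cmult)
    show "(\<lambda>y. ennreal ((\<Sum>a\<in>A. (C a y)\<^sup>2) powr (p / 2))) \<in> borel_measurable ?P2"
      using Cm by measurable
  qed
  also have "\<dots> \<le> ennreal (K powr p * G) * ennreal (K powr p * (\<Sum>a\<in>A. real (card (R a))) powr (p / 2) * H)"
    by (intro mult_left_mono outer) auto
  finally show ?thesis
    using GH by (simp add: ennreal_mult[symmetric] mult_ac G_def H_def)
qed

locale decoupled_sum = indep_sampling M \<mu> \<nu> \<xi> \<eta>
  for M :: "'m measure" and \<mu> :: "'x measure" and \<nu> :: "'y measure"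
    and \<xi> :: "nat \<Rightarrow> 'm \<Rightarrow> 'x" and \<eta> :: "nat \<Rightarrow> 'm \<Rightarrow> 'y" +
  fixes L :: "(nat \<times> nat) set"
  assumes finite_L: "finite L" and L_nonempty: "L \<noteq> {}" and L_pos: "L \<subseteq> {1..} \<times> {1..}"
begin

lemma
  fixes g :: "'x \<Rightarrow> real" and h :: "'y \<Rightarrow> real"
  assumes p: "p \<ge> 2" and K: "K \<ge> 0"
    and Hg: "iid_moment_bound \<mu> p K (card L)" and Hh: "iid_moment_bound \<nu> p K (card L)"
    and g: "centered_Lp \<mu> p g" and h: "centered_Lp \<nu> p h"
  shows integrable_bilinear_sum:
      "integrable M (\<lambda>\<omega>. \<bar>\<Sum>(a, b)\<in>L. g (\<xi> a \<omega>) * h (\<eta> b \<omega>)\<bar> powr p)"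
    and integral_bilinear_sum_le:
      "(\<integral>\<omega>. \<bar>\<Sum>(a, b)\<in>L. g (\<xi> a \<omega>) * h (\<eta> b \<omega>)\<bar> powr p \<partial>M)
        \<le> K powr p * K powr p * real (card L) powr (p / 2)
          * (\<integral>x. \<bar>g x\<bar> powr p \<partial>\<mu>) * (\<integral>y. \<bar>h y\<bar> powr p \<partial>\<nu>)"
proof -
  define A where "A = fst ` L"
  define B where "B = snd ` L"
  have A: "finite A" "A \<noteq> {}" "A \<subseteq> {1..}" "card A \<le> card L"
    using finite_L L_nonempty L_pos by (auto simp: A_def card_image_le)
  have B: "finite B" "B \<noteq> {}" "B \<subseteq> {1..}" "card B \<le> card L"
    using finite_L L_nonempty L_pos by (auto simp: B_def card_image_le)
  define La where "La = (\<lambda>a. {b. (a, b) \<in> L})"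
  have LaB: "La a \<subseteq> B" for a by (force simp: La_def B_def)
  have finLa: "finite (La a)" for a using LaB B(1) finite_subset by blast
  have L_Sigma: "L = Sigma A La" by (force simp: A_def La_def)
  have card_L: "(\<Sum>a\<in>A. real (card (La a))) = real (card L)"
    unfolding L_Sigma using A(1) finLa by (simp add: card_SigmaI)
  have gm: "g \<in> borel_measurable \<mu>" and hm: "h \<in> borel_measurable \<nu>"
    using g h by (auto simp: centered_Lp_def)
  define F where "F = (\<lambda>z :: (nat \<Rightarrow> 'x) \<times> (nat \<Rightarrow> 'y).
    \<bar>\<Sum>a\<in>A. (\<Sum>b\<in>La a. h (snd z b)) * g (fst z a)\<bar> powr p)"
  have Fm: "F \<in> borel_measurable (PiM A (\<lambda>_. \<mu>) \<Otimes>\<^sub>M PiM B (\<lambda>_. \<nu>))"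
    unfolding F_def using gm hm LaB by (rule measurable_bilinear_PiM)
  have integrand_eq: "\<bar>\<Sum>(a, b)\<in>L. g (\<xi> a \<omega>) * h (\<eta> b \<omega>)\<bar> powr p
      = F (\<lambda>i\<in>A. \<xi> i \<omega>, \<lambda>j\<in>B. \<eta> j \<omega>)" for \<omega>
  proof -
    have "(\<Sum>(a, b)\<in>L. g (\<xi> a \<omega>) * h (\<eta> b \<omega>)) = (\<Sum>a\<in>A. (\<Sum>b\<in>La a. h (\<eta> b \<omega>)) * g (\<xi> a \<omega>))"
      unfolding L_Sigma using A(1) finLa
      by (simp add: sum.Sigma[symmetric] sum_distrib_left sum_distrib_right mult.commute)
    also have "\<dots> = (\<Sum>a\<in>A. (\<Sum>b\<in>La a. h ((\<lambda>j\<in>B. \<eta> j \<omega>) b)) * g ((\<lambda>i\<in>A. \<xi> i \<omega>) a))"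
      using LaB by (intro sum.cong refl arg_cong2[where f = "(*)"]) auto
    finally show ?thesis by (simp add: F_def)
  qed
  have "(\<integral>\<^sup>+\<omega>. \<bar>\<Sum>(a, b)\<in>L. g (\<xi> a \<omega>) * h (\<eta> b \<omega>)\<bar> powr p \<partial>M)
      = (\<integral>\<^sup>+z. F z \<partial>(PiM A (\<lambda>_. \<mu>) \<Otimes>\<^sub>M PiM B (\<lambda>_. \<nu>)))"
    unfolding integrand_eq using Fm by (intro nn_integral_restrict_pair A(1,3) B(1,3)) measurable
  also have "\<dots> \<le> ennreal (K powr p * K powr p * real (card L) powr (p / 2)
      * (\<integral>x. \<bar>g x\<bar> powr p \<partial>\<mu>) * (\<integral>y. \<bar>h y\<bar> powr p \<partial>\<nu>))"
    using nn_integral_bilinear_PiM_le[where R = La, OF p K mu.prob_space_axioms nu.prob_space_axioms Hg Hh g h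
        A(1,2,4) B(1,2,4) LaB]
    by (simp add: F_def card_L)
  finally have nn: "(\<integral>\<^sup>+\<omega>. \<bar>\<Sum>(a, b)\<in>L. g (\<xi> a \<omega>) * h (\<eta> b \<omega>)\<bar> powr p \<partial>M)
      \<le> ennreal (K powr p * K powr p * real (card L) powr (p / 2)
        * (\<integral>x. \<bar>g x\<bar> powr p \<partial>\<mu>) * (\<integral>y. \<bar>h y\<bar> powr p \<partial>\<nu>))" .
  have meas: "(\<lambda>\<omega>. \<bar>\<Sum>(a, b)\<in>L. g (\<xi> a \<omega>) * h (\<eta> b \<omega>)\<bar> powr p) \<in> borel_measurable M"
    unfolding integrand_eq using measurable_compose[OF measurable_restrict_pair[OF A(3) B(3)] Fm] .
  show int: "integrable M (\<lambda>\<omega>. \<bar>\<Sum>(a, b)\<in>L. g (\<xi> a \<omega>) * h (\<eta> b \<omega>)\<bar> powr p)"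
    using nn by (intro integrableI_nonneg[OF meas]) (auto simp: le_less_trans)
  show "(\<integral>\<omega>. \<bar>\<Sum>(a, b)\<in>L. g (\<xi> a \<omega>) * h (\<eta> b \<omega>)\<bar> powr p \<partial>M)
      \<le> K powr p * K powr p * real (card L) powr (p / 2) * (\<integral>x. \<bar>g x\<bar> powr p \<partial>\<mu>) * (\<integral>y. \<bar>h y\<bar> powr p \<partial>\<nu>)"
    using nn nn_integral_eq_integral[OF int] K
    by (simp add: ennreal_le_iff integral_nonneg_AE)
qed

end

lemma SL_add: "SL L (\<lambda>z. F z + G z) \<xi> \<eta> \<omega> = SL L F \<xi> \<eta> \<omega> + SL L G \<xi> \<eta> \<omega>"
  by (simp add: SL_def sum.distrib split_beta distrib_left)

lemma SL_cmult: "SL L (\<lambda>z. c * F z) \<xi> \<eta> \<omega> = c * SL L F \<xi> \<eta> \<omega>"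
  by (simp add: SL_def sum_distrib_left split_beta mult_ac)

lemma SL_sum: "SL L (\<lambda>z. \<Sum>i\<in>I. F i z) \<xi> \<eta> \<omega> = (\<Sum>i\<in>I. SL L (F i) \<xi> \<eta> \<omega>)"
  unfolding SL_def split_beta sum_distrib_left by (rule sum.swap)

context decoupled_sum
begin

lemma SL_eq_sum: "SL L F \<xi> \<eta> \<omega> = 1 / sqrt (real (card L)) * (\<Sum>ab\<in>L. F (\<xi> (fst ab) \<omega>, \<eta> (snd ab) \<omega>))"
  by (simp add: SL_def split_beta)

lemma measurable_SL:
  assumes "F \<in> borel_measurable (\<mu> \<Otimes>\<^sub>M \<nu>)"
  shows "SL L F \<xi> \<eta> \<in> borel_measurable M"
proof -
  have "(\<lambda>\<omega>. F (\<xi> (fst ab) \<omega>, \<eta> (snd ab) \<omega>)) \<in> borel_measurable M" if "ab \<in> L" for ab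
    using measurable_compose[OF measurable_pair_sample assms] L_pos that by auto
  then show ?thesis
    unfolding SL_eq_sum[abs_def] by (intro borel_measurable_times borel_measurable_sum) auto
qed

lemma
  assumes p: "p \<ge> 1" and F: "F \<in> borel_measurable (\<mu> \<Otimes>\<^sub>M \<nu>)"
    and Fi: "integrable (\<mu> \<Otimes>\<^sub>M \<nu>) (\<lambda>z. \<bar>F z\<bar> powr p)"
  shows integrable_abs_powr_SL: "integrable M (\<lambda>\<omega>. \<bar>SL L F \<xi> \<eta> \<omega>\<bar> powr p)"
    and Lpn_SL_le: "Lpn M p (SL L F \<xi> \<eta>) \<le> sqrt (real (card L)) * Lpn (\<mu> \<Otimes>\<^sub>M \<nu>) p F"
proof -
  let ?t = "\<lambda>ab \<omega>. F (\<xi> (fst ab) \<omega>, \<eta> (snd ab) \<omega>)"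
  have pos: "fst ab \<ge> 1" "snd ab \<ge> 1" if "ab \<in> L" for ab using L_pos that by auto
  have tm: "?t ab \<in> borel_measurable M" if "ab \<in> L" for ab
    using measurable_compose[OF measurable_pair_sample F] pos[OF that] by auto
  have ti: "integrable M (\<lambda>\<omega>. \<bar>?t ab \<omega>\<bar> powr p)" if "ab \<in> L" for ab
    using integrable_abs_powr_pair[OF pos[OF that] F Fi] .
  have "integrable M (\<lambda>\<omega>. \<bar>\<Sum>ab\<in>L. ?t ab \<omega>\<bar> powr p)"
    by (rule integrable_abs_powr_sum[OF p finite_L]) (use tm ti in auto)
  then show "integrable M (\<lambda>\<omega>. \<bar>SL L F \<xi> \<eta> \<omega>\<bar> powr p)"
    unfolding SL_eq_sum by (rule integrable_abs_powr_cmult)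
  have "Lpn M p (\<lambda>\<omega>. \<Sum>ab\<in>L. ?t ab \<omega>) \<le> (\<Sum>ab\<in>L. Lpn M p (?t ab))"
    by (rule Lpn_sum_le[OF p finite_L]) (use tm ti in auto)
  also have "\<dots> = (\<Sum>ab\<in>L. Lpn (\<mu> \<Otimes>\<^sub>M \<nu>) p F)"
    using Lpn_pair[OF _ _ F Fi] pos by (intro sum.cong) auto
  also have "\<dots> = real (card L) * Lpn (\<mu> \<Otimes>\<^sub>M \<nu>) p F"
    by simp
  finally have "Lpn M p (SL L F \<xi> \<eta>) \<le> 1 / sqrt (real (card L)) * (real (card L) * Lpn (\<mu> \<Otimes>\<^sub>M \<nu>) p F)"
    unfolding SL_eq_sum[abs_def] using p by (subst Lpn_cmult) (auto intro: divide_right_mono)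
  also have "\<dots> = (real (card L) / sqrt (real (card L))) * Lpn (\<mu> \<Otimes>\<^sub>M \<nu>) p F"
    by simp
  also have "\<dots> = sqrt (real (card L)) * Lpn (\<mu> \<Otimes>\<^sub>M \<nu>) p F"
    by (simp add: real_div_sqrt)
  finally show "Lpn M p (SL L F \<xi> \<eta>) \<le> sqrt (real (card L)) * Lpn (\<mu> \<Otimes>\<^sub>M \<nu>) p F" .
qed

lemma
  fixes g :: "'x \<Rightarrow> real" and h :: "'y \<Rightarrow> real"
  assumes p: "p \<ge> 2" and K: "K \<ge> 0"
    and Hg: "iid_moment_bound \<mu> p K (card L)" and Hh: "iid_moment_bound \<nu> p K (card L)"
    and g: "centered_Lp \<mu> p g" and h: "centered_Lp \<nu> p h"
  shows integrable_abs_powr_SL_tensor: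
      "integrable M (\<lambda>\<omega>. \<bar>SL L (\<lambda>z. g (fst z) * h (snd z)) \<xi> \<eta> \<omega>\<bar> powr p)"
    and Lpn_SL_tensor_le:
      "Lpn M p (SL L (\<lambda>z. g (fst z) * h (snd z)) \<xi> \<eta>) \<le> K\<^sup>2 * Lpn \<mu> p g * Lpn \<nu> p h"
proof -
  define s where "s = sqrt (real (card L))"
  have s: "s > 0" using finite_L L_nonempty by (simp add: s_def card_gt_0_iff)
  have SL_eq: "SL L (\<lambda>z. g (fst z) * h (snd z)) \<xi> \<eta> = (\<lambda>\<omega>. 1 / s * (\<Sum>(a, b)\<in>L. g (\<xi> a \<omega>) * h (\<eta> b \<omega>)))"
    by (rule ext) (simp add: SL_def s_def split_beta)
  show "integrable M (\<lambda>\<omega>. \<bar>SL L (\<lambda>z. g (fst z) * h (snd z)) \<xi> \<eta> \<omega>\<bar> powr p)"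
    unfolding SL_eq by (rule integrable_abs_powr_cmult[OF integrable_bilinear_sum[OF p K Hg Hh g h]])
  define G where "G = (\<integral>x. \<bar>g x\<bar> powr p \<partial>\<mu>)"
  define H where "H = (\<integral>y. \<bar>h y\<bar> powr p \<partial>\<nu>)"
  have GH: "G \<ge> 0" "H \<ge> 0" unfolding G_def H_def by (auto intro!: integral_nonneg_AE)
  have "Lpn M p (\<lambda>\<omega>. \<Sum>(a, b)\<in>L. g (\<xi> a \<omega>) * h (\<eta> b \<omega>))
      \<le> (K powr p * K powr p * real (card L) powr (p / 2) * G * H) powr (1 / p)"
    using p integral_bilinear_sum_le[OF p K Hg Hh g h] by (intro Lpn_le_powr) (auto simp: G_def H_def)
  also have "\<dots> = K\<^sup>2 * s * (G powr (1 / p) * H powr (1 / p))"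
    using p K GH by (simp add: powr_mult powr_powr s_def powr_half_sqrt power2_eq_square)
  finally have "1 / s * Lpn M p (\<lambda>\<omega>. \<Sum>(a, b)\<in>L. g (\<xi> a \<omega>) * h (\<eta> b \<omega>))
      \<le> 1 / s * (K\<^sup>2 * s * (G powr (1 / p) * H powr (1 / p)))"
    using s by (intro mult_left_mono) auto
  then show "Lpn M p (SL L (\<lambda>z. g (fst z) * h (snd z)) \<xi> \<eta>) \<le> K\<^sup>2 * Lpn \<mu> p g * Lpn \<nu> p h"
    unfolding SL_eq using p s by (subst Lpn_cmult) (auto simp: Lpn_def G_def H_def)
qed

lemma
  fixes g :: "nat \<Rightarrow> 'x \<Rightarrow> real" and h :: "nat \<Rightarrow> 'y \<Rightarrow> real"
  assumes p: "p \<ge> 2" and K: "K \<ge> 0"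
    and Hg: "iid_moment_bound \<mu> p K (card L)" and Hh: "iid_moment_bound \<nu> p K (card L)"
    and g: "\<And>i. centered_Lp \<mu> p (g i)" and h: "\<And>j. centered_Lp \<nu> p (h j)" and Q: "finite Q"
  shows integrable_abs_powr_SL_expansion: "integrable M (\<lambda>\<omega>.
      \<bar>SL L (\<lambda>z. \<Sum>(i, j)\<in>Q. lam i j * (g i (fst z) * h j (snd z))) \<xi> \<eta> \<omega>\<bar> powr p)"
    and Lpn_SL_expansion_le: "Lpn M p (SL L (\<lambda>z. \<Sum>(i, j)\<in>Q. lam i j * (g i (fst z) * h j (snd z))) \<xi> \<eta>)
      \<le> K\<^sup>2 * (\<Sum>(i, j)\<in>Q. \<bar>lam i j\<bar> * Lpn \<mu> p (g i) * Lpn \<nu> p (h j))"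
proof -
  have p1: "p \<ge> 1" using p by simp
  have [measurable]: "g i \<in> borel_measurable \<mu>" "h j \<in> borel_measurable \<nu>" for i j
    using g h by (auto simp: centered_Lp_def)
  let ?Y = "\<lambda>ij. SL L (\<lambda>z. g (fst ij) (fst z) * h (snd ij) (snd z)) \<xi> \<eta>"
  have SL_eq: "SL L (\<lambda>z. \<Sum>(i, j)\<in>Q. lam i j * (g i (fst z) * h j (snd z))) \<xi> \<eta>
      = (\<lambda>\<omega>. \<Sum>ij\<in>Q. lam (fst ij) (snd ij) * ?Y ij \<omega>)"
    by (rule ext) (simp add: split_beta SL_sum SL_cmult)
  have Ym: "(\<lambda>\<omega>. lam (fst ij) (snd ij) * ?Y ij \<omega>) \<in> borel_measurable M" for ij
    by (intro borel_measurable_times borel_measurable_const measurable_SL) measurable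
  have Yi: "integrable M (\<lambda>\<omega>. \<bar>lam (fst ij) (snd ij) * ?Y ij \<omega>\<bar> powr p)" for ij
    by (intro integrable_abs_powr_cmult integrable_abs_powr_SL_tensor[OF p K Hg Hh g h])
  show "integrable M (\<lambda>\<omega>. \<bar>SL L (\<lambda>z. \<Sum>(i, j)\<in>Q. lam i j * (g i (fst z) * h j (snd z))) \<xi> \<eta> \<omega>\<bar> powr p)"
    unfolding SL_eq by (rule integrable_abs_powr_sum[OF p1 Q]) (use Ym Yi in auto)
  have "Lpn M p (\<lambda>\<omega>. \<Sum>ij\<in>Q. lam (fst ij) (snd ij) * ?Y ij \<omega>)
      \<le> (\<Sum>ij\<in>Q. Lpn M p (\<lambda>\<omega>. lam (fst ij) (snd ij) * ?Y ij \<omega>))"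
    by (rule Lpn_sum_le[OF p1 Q]) (use Ym Yi in auto)
  also have "\<dots> \<le> (\<Sum>ij\<in>Q. \<bar>lam (fst ij) (snd ij)\<bar> * (K\<^sup>2 * Lpn \<mu> p (g (fst ij)) * Lpn \<nu> p (h (snd ij))))"
    using p1 Lpn_SL_tensor_le[OF p K Hg Hh g h]
    by (intro sum_mono) (auto simp: Lpn_cmult intro: mult_left_mono)
  also have "\<dots> = K\<^sup>2 * (\<Sum>(i, j)\<in>Q. \<bar>lam i j\<bar> * Lpn \<mu> p (g i) * Lpn \<nu> p (h j))"
    by (simp add: sum_distrib_left split_beta mult_ac)
  finally show "Lpn M p (SL L (\<lambda>z. \<Sum>(i, j)\<in>Q. lam i j * (g i (fst z) * h j (snd z))) \<xi> \<eta>)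
      \<le> K\<^sup>2 * (\<Sum>(i, j)\<in>Q. \<bar>lam i j\<bar> * Lpn \<mu> p (g i) * Lpn \<nu> p (h j))"
    unfolding SL_eq .
qed

end

section \<open>Representations of \<open>f\<close>\<close>

definition D_representation :: "'x measure \<Rightarrow> 'y measure \<Rightarrow> real \<Rightarrow> ('x \<times> 'y \<Rightarrow> real) \<Rightarrow>
    (nat \<Rightarrow> nat \<Rightarrow> real) \<Rightarrow> (nat \<Rightarrow> 'x \<Rightarrow> real) \<Rightarrow> (nat \<Rightarrow> 'y \<Rightarrow> real) \<Rightarrow> bool" where
  "D_representation \<mu> \<nu> p f lam g h \<longleftrightarrow> (\<forall>i. centered_Lp \<mu> p (g i)) \<and> (\<forall>j. centered_Lp \<nu> p (h j)) \<and>
     (\<lambda>N. \<integral>\<^sup>+ z. ennreal (\<bar>(\<Sum>i<N. \<Sum>j<N. lam i j * g i (fst z) * h j (snd z)) - f z\<bar> powr p)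
        \<partial>(\<mu> \<Otimes>\<^sub>M \<nu>)) \<longlonglongrightarrow> 0"

definition D_cost :: "'x measure \<Rightarrow> 'y measure \<Rightarrow> real \<Rightarrow>
    (nat \<Rightarrow> nat \<Rightarrow> real) \<Rightarrow> (nat \<Rightarrow> 'x \<Rightarrow> real) \<Rightarrow> (nat \<Rightarrow> 'y \<Rightarrow> real) \<Rightarrow> ereal" where
  "D_cost \<mu> \<nu> p lam g h = (\<Sum>i. \<Sum>j. ereal (\<bar>lam i j\<bar> * Lpn \<mu> p (g i) * Lpn \<nu> p (h j)))"

lemma Dnorm_eq_Inf:
  "Dnorm \<mu> \<nu> p f = Inf {D_cost \<mu> \<nu> p lam g h | lam g h. D_representation \<mu> \<nu> p f lam g h}"
  unfolding Dnorm_def D_representation_def D_cost_def centered_Lp_def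
  by (rule arg_cong[where f = Inf]) blast

lemma D_cost_nonneg: "D_cost \<mu> \<nu> p lam g h \<ge> 0"
  unfolding D_cost_def by (auto intro!: suminf_nonneg summable_ereal_pos simp: Lpn_nonneg)

lemma Dnorm_nonneg: "Dnorm \<mu> \<nu> p f \<ge> 0"
  unfolding Dnorm_eq_Inf by (auto intro!: Inf_greatest D_cost_nonneg)

lemma D_cost_partial_sum_le:
  "ereal (\<Sum>i<N. \<Sum>j<N. \<bar>lam i j\<bar> * Lpn \<mu> p (g i) * Lpn \<nu> p (h j)) \<le> D_cost \<mu> \<nu> p lam g h"
proof -
  define a where "a = (\<lambda>i j. ereal (\<bar>lam i j\<bar> * Lpn \<mu> p (g i) * Lpn \<nu> p (h j)))"
  have a0: "a i j \<ge> 0" for i j by (simp add: a_def Lpn_nonneg)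
  have "ereal (\<Sum>i<N. \<Sum>j<N. \<bar>lam i j\<bar> * Lpn \<mu> p (g i) * Lpn \<nu> p (h j)) = (\<Sum>i<N. \<Sum>j<N. a i j)"
    by (simp add: a_def sum_ereal)
  also have "\<dots> \<le> (\<Sum>i<N. \<Sum>j. a i j)"
    by (intro sum_mono sum_le_suminf summable_ereal_pos a0) auto
  also have "\<dots> \<le> (\<Sum>i. \<Sum>j. a i j)"
    by (intro sum_le_suminf summable_ereal_pos suminf_nonneg a0) auto
  finally show ?thesis by (simp add: D_cost_def a_def)
qed

lemma ereal_le_of_tendsto_remainder:
  fixes x :: real and c :: ereal
  assumes le: "eventually (\<lambda>N. x \<le> u N + r N) sequentially"
    and u: "\<And>N. ereal (u N) \<le> c" and r: "r \<longlonglongrightarrow> 0"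
  shows "ereal x \<le> c"
proof (rule ereal_le_epsilon2)
  fix e :: real assume "0 < e"
  with le r have "eventually (\<lambda>N. x \<le> u N + r N \<and> r N < e) sequentially"
    by (intro eventually_conj) (auto dest: order_tendstoD(2))
  then obtain N where "x \<le> u N + r N" "r N < e" by (auto simp: eventually_sequentially)
  then have "ereal x \<le> ereal (u N) + ereal e" by simp
  also have "\<dots> \<le> c + ereal e" using u by (intro add_right_mono)
  finally show "ereal x \<le> c + ereal e" .
qed

context decoupled_sum
begin

lemma
  assumes p: "p \<ge> 1" and fm: "f \<in> borel_measurable (\<mu> \<Otimes>\<^sub>M \<nu>)" and Fm: "F \<in> borel_measurable (\<mu> \<Otimes>\<^sub>M \<nu>)"
    and Fi: "integrable M (\<lambda>\<omega>. \<bar>SL L F \<xi> \<eta> \<omega>\<bar> powr p)"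
    and tail: "integrable (\<mu> \<Otimes>\<^sub>M \<nu>) (\<lambda>z. \<bar>f z - F z\<bar> powr p)"
  shows integrable_abs_powr_SL_approx: "integrable M (\<lambda>\<omega>. \<bar>SL L f \<xi> \<eta> \<omega>\<bar> powr p)"
    and Lpn_SL_approx_le: "Lpn M p (SL L f \<xi> \<eta>)
      \<le> Lpn M p (SL L F \<xi> \<eta>) + sqrt (real (card L)) * Lpn (\<mu> \<Otimes>\<^sub>M \<nu>) p (\<lambda>z. f z - F z)"
proof -
  let ?R = "SL L (\<lambda>z. f z - F z) \<xi> \<eta>"
  have m: "SL L F \<xi> \<eta> \<in> borel_measurable M" "?R \<in> borel_measurable M"
    using measurable_SL[OF Fm] measurable_SL[OF borel_measurable_diff[OF fm Fm]] by auto
  have "SL L f \<xi> \<eta> \<omega> = SL L F \<xi> \<eta> \<omega> + ?R \<omega>" for \<omega>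
    using SL_add[where F = F and G = "\<lambda>z. f z - F z" and L = L and \<xi> = \<xi> and \<eta> = \<eta>] by simp
  then have split: "SL L f \<xi> \<eta> = (\<lambda>\<omega>. SL L F \<xi> \<eta> \<omega> + ?R \<omega>)" ..
  note Ri = integrable_abs_powr_SL[OF p borel_measurable_diff[OF fm Fm] tail]
  show "integrable M (\<lambda>\<omega>. \<bar>SL L f \<xi> \<eta> \<omega>\<bar> powr p)"
    unfolding split using integrable_abs_powr_add[OF p m Fi Ri] .
  show "Lpn M p (SL L f \<xi> \<eta>)
      \<le> Lpn M p (SL L F \<xi> \<eta>) + sqrt (real (card L)) * Lpn (\<mu> \<Otimes>\<^sub>M \<nu>) p (\<lambda>z. f z - F z)"
    unfolding split using Lpn_add_le[OF p m Fi Ri] Lpn_SL_le[OF p borel_measurable_diff[OF fm Fm] tail]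
    by linarith
qed

lemma lpnorm_SL_le_D_cost:
  assumes p: "p \<ge> 2" and K: "K \<ge> 0"
    and Hg: "iid_moment_bound \<mu> p K (card L)" and Hh: "iid_moment_bound \<nu> p K (card L)"
    and fm[measurable]: "f \<in> borel_measurable (\<mu> \<Otimes>\<^sub>M \<nu>)"
    and rep: "D_representation \<mu> \<nu> p f lam g h"
  shows "lpnorm M p (SL L f \<xi> \<eta>) \<le> ereal (K\<^sup>2) * D_cost \<mu> \<nu> p lam g h"
proof -
  have p1: "p \<ge> 1" using p by simp
  have g: "\<And>i. centered_Lp \<mu> p (g i)" and h: "\<And>j. centered_Lp \<nu> p (h j)"
    using rep by (auto simp: D_representation_def)
  have [measurable]: "g i \<in> borel_measurable \<mu>" "h j \<in> borel_measurable \<nu>" for i j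
    using g h by (auto simp: centered_Lp_def)
  define Q where "Q = (\<lambda>N::nat. {..<N} \<times> {..<N})"
  define FN where "FN = (\<lambda>N z. \<Sum>(i, j)\<in>Q N. lam i j * (g i (fst z) * h j (snd z)))"
  have FN_eq: "(\<Sum>i<N. \<Sum>j<N. lam i j * g i (fst z) * h j (snd z)) = FN N z" for N z
    by (simp add: FN_def Q_def sum.cartesian_product mult.assoc)
  have FNm [measurable]: "FN N \<in> borel_measurable (\<mu> \<Otimes>\<^sub>M \<nu>)" for N
    unfolding FN_def by measurable
  define I where "I = (\<lambda>N. \<integral>\<^sup>+z. ennreal (\<bar>f z - FN N z\<bar> powr p) \<partial>(\<mu> \<Otimes>\<^sub>M \<nu>))"
  have I: "I \<longlonglongrightarrow> 0"
    using rep by (simp add: D_representation_def I_def FN_eq abs_minus_commute)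
  define \<pi> where "\<pi> = (\<lambda>N. \<Sum>(i, j)\<in>Q N. \<bar>lam i j\<bar> * Lpn \<mu> p (g i) * Lpn \<nu> p (h j))"
  define r where "r = (\<lambda>N. sqrt (real (card L)) * Lpn (\<mu> \<Otimes>\<^sub>M \<nu>) p (\<lambda>z. f z - FN N z))"
  have r: "r \<longlonglongrightarrow> 0"
    unfolding r_def using p1 I unfolding I_def
    by (intro tendsto_mult_right_zero Lpn_tendsto_zero) auto
  have bound: "integrable M (\<lambda>\<omega>. \<bar>SL L f \<xi> \<eta> \<omega>\<bar> powr p)
      \<and> Lpn M p (SL L f \<xi> \<eta>) \<le> K\<^sup>2 * \<pi> N + r N" if "I N < \<infinity>" for N
  proof -
    have Di: "integrable (\<mu> \<Otimes>\<^sub>M \<nu>) (\<lambda>z. \<bar>f z - FN N z\<bar> powr p)"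
      using that by (intro integrableI_nonneg) (auto simp: I_def)
    have Hi: "integrable M (\<lambda>\<omega>. \<bar>SL L (FN N) \<xi> \<eta> \<omega>\<bar> powr p)"
      and Hb: "Lpn M p (SL L (FN N) \<xi> \<eta>) \<le> K\<^sup>2 * \<pi> N"
      using integrable_abs_powr_SL_expansion[OF p K Hg Hh g h, of "Q N" lam]
        Lpn_SL_expansion_le[OF p K Hg Hh g h, of "Q N" lam]
      by (simp_all add: FN_def \<pi>_def Q_def)
    show ?thesis
      using integrable_abs_powr_SL_approx[OF p1 fm FNm Hi Di] Lpn_SL_approx_le[OF p1 fm FNm Hi Di] Hb
      by (simp add: r_def)
  qed
  have ev: "eventually (\<lambda>N. I N < \<infinity>) sequentially"
    using order_tendstoD(2)[OF I, of \<infinity>] by simp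
  then obtain N0 where "I N0 < \<infinity>" by (auto simp: eventually_sequentially)
  then have "lpnorm M p (SL L f \<xi> \<eta>) = ereal (Lpn M p (SL L f \<xi> \<eta>))"
    using bound by (simp add: lpnorm_def Lpn_def)
  also have "\<dots> \<le> ereal (K\<^sup>2) * D_cost \<mu> \<nu> p lam g h"
  proof (rule ereal_le_of_tendsto_remainder[OF _ _ r])
    show "eventually (\<lambda>N. Lpn M p (SL L f \<xi> \<eta>) \<le> K\<^sup>2 * \<pi> N + r N) sequentially"
      using ev by eventually_elim (use bound in blast)
    fix N
    have "\<pi> N = (\<Sum>i<N. \<Sum>j<N. \<bar>lam i j\<bar> * Lpn \<mu> p (g i) * Lpn \<nu> p (h j))"
      by (simp add: \<pi>_def Q_def sum.cartesian_product)
    then have "ereal (\<pi> N) \<le> D_cost \<mu> \<nu> p lam g h"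
      by (simp only: D_cost_partial_sum_le)
    then show "ereal (K\<^sup>2 * \<pi> N) \<le> ereal (K\<^sup>2) * D_cost \<mu> \<nu> p lam g h"
      by (simp add: ereal_mult_left_mono flip: times_ereal.simps(1))
  qed
  finally show ?thesis .
qed

lemma lpnorm_SL_le_Dnorm:
  assumes p: "p \<ge> 2" and K: "K \<ge> 0"
    and Hg: "iid_moment_bound \<mu> p K (card L)" and Hh: "iid_moment_bound \<nu> p K (card L)"
    and fm: "f \<in> borel_measurable (\<mu> \<Otimes>\<^sub>M \<nu>)" and D: "Dnorm \<mu> \<nu> p f < \<infinity>"
  shows "lpnorm M p (SL L f \<xi> \<eta>) \<le> ereal (K\<^sup>2) * Dnorm \<mu> \<nu> p f"
proof -
  let ?C = "{D_cost \<mu> \<nu> p lam g h | lam g h. D_representation \<mu> \<nu> p f lam g h}"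
  have each: "lpnorm M p (SL L f \<xi> \<eta>) \<le> ereal (K\<^sup>2) * c" if "c \<in> ?C" for c
  proof -
    from that obtain lam g h where "D_representation \<mu> \<nu> p f lam g h" "c = D_cost \<mu> \<nu> p lam g h"
      by blast
    then show ?thesis using lpnorm_SL_le_D_cost[OF p K Hg Hh fm] by simp
  qed
  have "?C \<noteq> {}"
  proof
    assume "?C = {}"
    then have "Dnorm \<mu> \<nu> p f = \<infinity>" unfolding Dnorm_eq_Inf by (simp add: top_ereal_def)
    with D show False by simp
  qed
  then obtain c0 where c0: "c0 \<in> ?C" by blast
  show ?thesis
  proof (cases "K = 0")
    case True
    then show ?thesis using each[OF c0] by (simp add: zero_ereal_def[symmetric])
  next
    case False
    then have "lpnorm M p (SL L f \<xi> \<eta>) \<le> Inf {ereal (K\<^sup>2) * c | c. c \<in> ?C}"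
      using each by (auto intro!: Inf_greatest)
    also have "\<dots> = ereal (K\<^sup>2) * Inf {c. c \<in> ?C}"
      using False K by (intro ereal_Inf_cmult) simp
    finally show ?thesis by (simp add: Dnorm_eq_Inf)
  qed
qed

end

lemma ereal_le_Inf_power2_mult:
  fixes x D :: ereal and S :: "real set"
  assumes x: "0 \<le> x" and D: "0 \<le> D" "D \<noteq> \<infinity>" and crude: "x \<le> ereal C * D"
    and bound: "\<And>K. K \<in> S \<Longrightarrow> x \<le> ereal (K\<^sup>2) * D"
    and up: "\<And>K K'. K \<in> S \<Longrightarrow> K \<le> K' \<Longrightarrow> K' \<in> S"
  shows "x \<le> (Inf (ereal ` S))\<^sup>2 * D"
proof -
  have rhs_nonneg: "0 \<le> (Inf (ereal ` S))\<^sup>2 * D"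
    using D by (cases "Inf (ereal ` S)") (auto simp: power2_eq_square ereal_zero_le_0_iff)
  show ?thesis
  proof (cases "D = 0")
    case True
    then show ?thesis using crude rhs_nonneg by simp
  next
    case False
    then obtain d where d: "D = ereal d" "d > 0" using D by (cases D) auto
    show ?thesis
    proof (cases "\<exists>K\<in>S. K \<le> 0")
      case True
      then have "0 \<in> S" using up by blast
      then show ?thesis using bound[of 0] rhs_nonneg by (simp add: zero_ereal_def[symmetric])
    next
      case False
      then have pos: "K > 0" if "K \<in> S" for K using that by force
      show ?thesis
      proof (cases "S = {}")
        case True
        then show ?thesis using d by (simp add: top_ereal_def power2_eq_square)
      next
        case False
        then obtain K1 where K1: "K1 \<in> S" by blast
        have "x \<noteq> \<infinity>" using bound[OF K1] d by auto
        then obtain x' where x': "x = ereal x'" "x' \<ge> 0" using x by (cases x) auto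
        define t where "t = sqrt (x' / d)"
        have t_le: "t \<le> K" if "K \<in> S" for K
        proof -
          have "x' / d \<le> K\<^sup>2" using bound[OF that] x' d by (simp add: divide_le_eq)
          then show ?thesis using pos[OF that] by (simp add: t_def real_le_lsqrt)
        qed
        have "ereal t \<le> Inf (ereal ` S)" using t_le by (auto intro!: Inf_greatest)
        moreover have "Inf (ereal ` S) \<le> ereal K1" using K1 by (auto intro: Inf_lower)
        ultimately obtain k where k: "Inf (ereal ` S) = ereal k" "t \<le> k"
          by (cases "Inf (ereal ` S)") auto
        have "x' = t\<^sup>2 * d" using x' d by (simp add: t_def)
        also have "\<dots> \<le> k\<^sup>2 * d" using k d x' by (intro mult_right_mono power_mono) (auto simp: t_def)
        finally show ?thesis using x' k d by simp
      qed
    qed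
  qed
qed

theorem mainTheorem2:
  fixes M :: "'m measure" and \<mu> :: "'x measure" and \<nu> :: "'y measure"
    and \<xi> :: "nat \<Rightarrow> 'm \<Rightarrow> 'x" and \<eta> :: "nat \<Rightarrow> 'm \<Rightarrow> 'y"
    and f :: "'x \<times> 'y \<Rightarrow> real" and p :: real
  assumes "prob_space M" "prob_space \<mu>" "prob_space \<nu>"
    and "indep_laws M \<mu> \<nu> \<xi> \<eta>"
    and "p \<ge> 2"
    and "f \<in> borel_measurable (\<mu> \<Otimes>\<^sub>M \<nu>)"
    and "integrable M (\<lambda>\<omega>. f (\<xi> 1 \<omega>, \<eta> 1 \<omega>))"
    and "(\<integral>\<omega>. f (\<xi> 1 \<omega>, \<eta> 1 \<omega>) \<partial>M) = 0"
    and "Dnorm \<mu> \<nu> p f < \<infinity>"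
  shows "(SUP L \<in> {L. L \<subseteq> {1..} \<times> {1..} \<and> finite L \<and> L \<noteq> {}}. lpnorm M p (SL L f \<xi> \<eta>))
           \<le> (KR p)\<^sup>2 * Dnorm \<mu> \<nu> p f"
proof (rule SUP_least)
  fix L :: "(nat \<times> nat) set" assume "L \<in> {L. L \<subseteq> {1..} \<times> {1..} \<and> finite L \<and> L \<noteq> {}}"
  then interpret decoupled_sum M \<mu> \<nu> \<xi> \<eta> L
    using assms(1-4) by (intro decoupled_sum.intro indep_sampling.intro decoupled_sum_axioms.intro
        indep_sampling_axioms.intro) auto
  have p: "p \<ge> 2" "p \<ge> 1" using assms(5) by auto
  note lpnorm_bound = lpnorm_SL_le_Dnorm[OF p(1) _ _ _ assms(6,9)]
  show "lpnorm M p (SL L f \<xi> \<eta>) \<le> (KR p)\<^sup>2 * Dnorm \<mu> \<nu> p f"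
    unfolding KR_eq_Inf
  proof (rule ereal_le_Inf_power2_mult)
    show "lpnorm M p (SL L f \<xi> \<eta>) \<le> ereal (real (card L)) * Dnorm \<mu> \<nu> p f"
      using lpnorm_bound[OF _ iid_moment_bound_sqrt_card[OF p(2) assms(2)]
          iid_moment_bound_sqrt_card[OF p(2) assms(3)]] by simp
    show "lpnorm M p (SL L f \<xi> \<eta>) \<le> ereal (K\<^sup>2) * Dnorm \<mu> \<nu> p f" if "K \<in> {K. KR_admissible p K}" for K
      using that lpnorm_bound[OF _ iid_moment_bound_if_KR_admissible[OF _ p(2) assms(2)]
          iid_moment_bound_if_KR_admissible[OF _ p(2) assms(3)]] by simp
  qed (use assms(9) KR_admissible_mono in \<open>auto simp: lpnorm_nonneg Dnorm_nonneg\<close>)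
qed

end
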